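(* Let $\mathcal Y\subset\mathbb R^d$ be a finite set such that no element of $\mathcal Y$ is a strict convex combination of other elements, let $Y$ be the matrix with columns $y\in\mathcal Y$, $\varepsilon>0$, and $\mathbf Z$ a standard multivariate normal random vector on $\mathbb R^d$. Define $F_{\varepsilon,\Delta}:\mathbb R^{\mathcal Y}\to\mathbb R$ by $$F_{\varepsilon,\Delta}(s)=\mathbb E\big[\max_{y\in\mathcal Y}s(y)+\varepsilon\mathbf Z^\top y\big]=\mathbb E\big[\max_{q\in\Delta^{\mathcal Y}}(s+\varepsilon Y^\top\mathbf Z)^\top q\big].$$ Then: (1) $F_{\varepsilon,\Delta}$ is convex and Lipschitz continuous (in particular proper, l.s.c. and convex). (2) $F_{\varepsilon,\Delta}$ is strictly convex on $V_\Delta$ and affine on $V_\Delta^\perp=\operatorname{span}(\mathbf 1)$; more precisely, for $s=s_{V_\Delta}+s_{V_\Delta^\perp}$ with $s_{V_\Delta}$ the orthogonal projection of $s$ onto $V_\Delta$ and for any $q_0\in\Delta^{\mathcal Y}$, $F_{\varepsilon,\Delta}(s)=\langle s_{V_\Delta^\perp}|q_0\rangle+F_{\varepsilon,\Delta}(s_{V_\Delta})$. (3) $F_{\varepsilon,\Delta}$ is differentiable on $\mathbb R^{\mathcal Y}$ with $\nabla F_{\varepsilon,\Delta}(s)=\mathbb E\big[\operatorname{argmax}_{q\in\Delta^{\mathcal Y}}(s+\varepsilon Y^\top\mathbf Z)^\top q\big]$ (the argmax being almost surely a singleton). (4) The Fenchel conjugate $\Omega_{\varepsilon,\Delta}:=F_{\varepsilon,\Delta}^*$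 has domain $\Delta^{\mathcal Y}$, and its restriction to the affine hull $H_\Delta$ of $\Delta^{\mathcal Y}$ is Legendre-type.
   Context: $\mathbb R^{\mathcal Y}$ is the space of vectors indexed by $\mathcal Y$ with components $s(y)$; $\Delta^{\mathcal Y}=\{q\in\mathbb R^{\mathcal Y}:q\ge0,\sum_yq_y=1\}$; $H_\Delta$ is its affine hull and $V_\Delta=\{v\in\mathbb R^{\mathcal Y}:\sum_yv_y=0\}$ its direction. A function is Legendre-type if it is strictly convex on the interior of its domain and essentially smooth (nonempty interior of the domain, differentiable there, gradient norm tending to $+\infty$ at the boundary of the domain); for a restriction to an affine subspace this is with respect to that subspace's metric. *)

theory Defs
  imports "HOL-Probability.Probability"
begin

definition strictly_convex_on :: "'a::real_vector set \<Rightarrow> ('a \<Rightarrow> real) \<Rightarrow> bool" where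
  "strictly_convex_on S f \<longleftrightarrow> convex S \<and>
     (\<forall>x\<in>S. \<forall>y\<in>S. \<forall>u::real. x \<noteq> y \<and> 0 < u \<and> u < 1 \<longrightarrow>
        f (u *\<^sub>R x + (1 - u) *\<^sub>R y) < u * f x + (1 - u) * f y)"

definition prob_simplex :: "(real ^ 'y::finite) set" where
  "prob_simplex = {q. (\<forall>y. 0 \<le> q $ y) \<and> (\<Sum>y\<in>UNIV. q $ y) = 1}"

definition simplex_hull :: "(real ^ 'y::finite) set" where
  "simplex_hull = {q. (\<Sum>y\<in>UNIV. q $ y) = 1}"

definition simplex_dir :: "(real ^ 'y::finite) set" where
  "simplex_dir = {v. (\<Sum>y\<in>UNIV. v $ y) = 0}"

text \<open>Orthogonal projection of s onto span(1) = V^\<bottom>.\<close>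
definition proj_ones :: "real ^ 'y::finite \<Rightarrow> real ^ 'y" where
  "proj_ones s = ((\<Sum>y\<in>UNIV. s $ y) / real CARD('y)) *\<^sub>R 1"

definition std_gauss :: "('d::finite \<Rightarrow> real) measure" where
  "std_gauss = PiM UNIV (\<lambda>_. density lborel std_normal_density)"

text \<open>Perturbed max: F(s) = E[max_y s(y) + eps Z^T y], points of the set Y given by Y :: 'y => R^d.\<close>
definition Fpert :: "real \<Rightarrow> ('y::finite \<Rightarrow> real ^ 'd::finite) \<Rightarrow> real ^ 'y \<Rightarrow> real" where
  "Fpert eps Y s = (\<integral>z. (MAX y\<in>UNIV. s $ y + eps * ((\<chi> i. z i) \<bullet> Y y)) \<partial>std_gauss)"

definition pert_obj :: "real \<Rightarrow> ('y::finite \<Rightarrow> real ^ 'd::finite) \<Rightarrow> real ^ 'y \<Rightarrow> ('d \<Rightarrow> real) \<Rightarrow> real ^ 'y \<Rightarrow> real" where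
  "pert_obj eps Y s z q = (\<Sum>y\<in>UNIV. (s $ y + eps * ((\<chi> i. z i) \<bullet> Y y)) * q $ y)"

definition fenchel_conj :: "('a::real_inner \<Rightarrow> real) \<Rightarrow> 'a \<Rightarrow> ereal" where
  "fenchel_conj f q = (SUP s. ereal (s \<bullet> q - f s))"

definition interior_rel :: "'a::real_normed_vector set \<Rightarrow> 'a set \<Rightarrow> 'a set" where
  "interior_rel H D = {x\<in>D. \<exists>e>0. ball x e \<inter> H \<subseteq> D}"

definition legendre_on :: "'a::euclidean_space set \<Rightarrow> 'a set \<Rightarrow> ('a \<Rightarrow> ereal) \<Rightarrow> bool" where
  "legendre_on H V f \<longleftrightarrow>
     (let D = {x\<in>H. f x \<noteq> \<infinity>}; I = interior_rel H D in
        I \<noteq> {} \<and> (\<forall>x\<in>I. \<bar>f x\<bar> \<noteq> \<infinity>) \<and>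
        strictly_convex_on I (\<lambda>x. real_of_ereal (f x)) \<and>
        (\<exists>G. (\<forall>x\<in>I. G x \<in> V \<and>
                ((\<lambda>x. real_of_ereal (f x)) has_derivative (\<lambda>h. G x \<bullet> h)) (at x within H)) \<and>
             (\<forall>b\<in>closure I - I. filterlim (\<lambda>x. norm (G x)) at_top (at b within I))))"

end

(*
  F(s) = E max_y (s_y + eps <Z, Y y>) is an average of convex, 1-Lipschitz functions of s
  which shift by c when s does, giving convexity, the Lipschitz bound and the behaviour
  along 1.  As Y is injective, ties between perturbed scores lie on Gaussian null
  hyperplanes, so almost surely the maximiser is a vertex e_y, and it does not move under
  perturbations of s smaller than half the gap between the scores; this gives the gradient
  formula.  Since every Y y is an exposed point, for s <> s' in V the set of Z on which the
  best indices inside and outside the argmax block of s - s' nearly tie is open and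
  nonempty, and there Jensen's inequality for the maximum is strict: F is strictly convex
  on V.  For the conjugate, s . q - F(s) is bounded above iff q is in the simplex; for q in
  the relative interior it is coercive on V and attains its maximum at a unique s(q) with
  grad F(s(q)) = q, and s(q) is the gradient of the conjugate.  It blows up at the boundary,
  because grad F(s)_y is bounded below by the probability that y dominates by a margin
  of 2 |s|.
*)
theory Submission
  imports Defs
begin

section \<open>The standard Gaussian measure\<close>

lemma prob_space_std_normal_distribution: "prob_space std_normal_distribution"
  by (rule prob_space_normal_density) simp

lemma prob_space_std_gauss: "prob_space (std_gauss :: ('d::finite \<Rightarrow> real) measure)"
  unfolding std_gauss_def by (intro prob_space_PiM prob_space_std_normal_distribution)

interpretation std_gauss: prob_space "std_gauss :: ('d::finite \<Rightarrow> real) measure"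
  by (rule prob_space_std_gauss)

lemma space_std_gauss [simp]: "space (std_gauss :: ('d::finite \<Rightarrow> real) measure) = UNIV"
  unfolding std_gauss_def by (simp add: space_PiM)

lemma measure_std_gauss_UNIV [simp]: "measure (std_gauss :: ('d::finite \<Rightarrow> real) measure) UNIV = 1"
  using std_gauss.prob_space by simp

lemma sets_std_gauss: "sets (std_gauss :: ('d::finite \<Rightarrow> real) measure) = sets (PiM UNIV (\<lambda>_. borel))"
  unfolding std_gauss_def by (intro sets_PiM_cong) auto

lemma measurable_std_gauss_component [measurable]:
  "(\<lambda>z. z i) \<in> borel_measurable (std_gauss :: ('d::finite \<Rightarrow> real) measure)"
  by (subst measurable_cong_sets[OF sets_std_gauss refl]) simp

lemma measurable_std_gauss_vec [measurable]:
  "(\<lambda>z. \<chi> i. z i) \<in> borel_measurable (std_gauss :: ('d::finite \<Rightarrow> real) measure)"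
proof (rule borel_measurable_euclidean_space[THEN iffD2], intro ballI)
  fix b :: "real^'d" assume "b \<in> Basis"
  then obtain j where "b = axis j 1" by (auto simp: Basis_vec_def)
  then have "(\<lambda>z. (\<chi> i. z i) \<bullet> b) = (\<lambda>z. z j)" by (simp add: inner_axis)
  then show "(\<lambda>z. (\<chi> i. z i) \<bullet> b) \<in> borel_measurable std_gauss"
    by (simp only: measurable_std_gauss_component)
qed

lemma distr_std_gauss_component:
  "distr (std_gauss :: ('d::finite \<Rightarrow> real) measure) std_normal_distribution (\<lambda>z. z i)
     = std_normal_distribution"
  unfolding std_gauss_def by (rule distr_PiM_component) (auto intro: prob_space_std_normal_distribution)

lemma inner_vec_lambda_eq_sum: "(\<chi> i. z i) \<bullet> (a :: real^'d::finite) = (\<Sum>i\<in>UNIV. z i * a $ i)"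
  by (simp add: inner_vec_def)

lemma integrable_std_gauss_component: "integrable std_gauss (\<lambda>z::'d::finite \<Rightarrow> real. z i)"
proof -
  have "integrable std_normal_distribution (\<lambda>x. x)"
    by (subst integrable_density) (auto simp: integrable_std_normal_moment[of 1, simplified])
  then show ?thesis
    by (subst (asm) distr_std_gauss_component[symmetric, of i]) (subst (asm) integrable_distr_eq, auto)
qed

lemma integral_std_gauss_component: "(\<integral>z. z i \<partial>(std_gauss :: ('d::finite \<Rightarrow> real) measure)) = 0"
proof -
  have "(\<integral>z. z i \<partial>(std_gauss :: ('d \<Rightarrow> real) measure))
      = (\<integral>x. x \<partial>distr std_gauss std_normal_distribution (\<lambda>z::'d \<Rightarrow> real. z i))"
    by (subst integral_distr) auto
  also have "\<dots> = (\<integral>x. std_normal_density x * x \<partial>lborel)"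
    by (subst distr_std_gauss_component, subst integral_density) auto
  also have "\<dots> = 0" using integral_std_normal_moment_odd[of 0] by simp
  finally show ?thesis .
qed

lemma integrable_std_gauss_inner:
  "integrable std_gauss (\<lambda>z::'d::finite \<Rightarrow> real. (\<chi> i. z i) \<bullet> a)"
  unfolding inner_vec_lambda_eq_sum
  by (intro Bochner_Integration.integrable_sum integrable_mult_left integrable_std_gauss_component)

lemma integral_std_gauss_inner:
  "(\<integral>z. (\<chi> i. z i) \<bullet> a \<partial>(std_gauss :: ('d::finite \<Rightarrow> real) measure)) = 0"
  unfolding inner_vec_lambda_eq_sum
  by (subst Bochner_Integration.integral_sum)
     (auto intro!: integrable_mult_left integrable_std_gauss_component simp: integral_std_gauss_component)

lemma indep_vars_std_gauss_components:
  "std_gauss.indep_vars (\<lambda>_. borel) (\<lambda>i z. z i) (UNIV :: 'd::finite set)"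
proof -
  have "distr std_gauss (PiM UNIV (\<lambda>i. borel)) (\<lambda>z. \<lambda>i\<in>UNIV. z i) = (std_gauss :: ('d \<Rightarrow> real) measure)"
    by (simp add: restrict_UNIV) (rule distr_id2, simp add: sets_std_gauss)
  also have "\<dots> = PiM UNIV (\<lambda>i. distr std_gauss borel (\<lambda>z. z i))"
  proof -
    have "distr std_gauss borel (\<lambda>z. z i) = std_normal_distribution" for i :: 'd
      by (subst distr_std_gauss_component[symmetric, of i]) (rule distr_cong, auto)
    then show ?thesis by (simp add: std_gauss_def)
  qed
  finally show ?thesis by (subst std_gauss.indep_vars_iff_distr_eq_PiM) auto
qed

text \<open>A nontrivial linear functional of the Gaussian vector is a centred normal variable with
  positive variance, so it has no atoms.\<close>
lemma std_gauss_hyperplane_null: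
  fixes a :: "real^'d::finite"
  assumes "a \<noteq> 0"
  shows "{z. (\<chi> i. z i) \<bullet> a = c} \<in> null_sets std_gauss"
proof -
  define I where "I = {i. a $ i \<noteq> 0}"
  have I: "I \<noteq> {}" using assms by (auto simp: I_def vec_eq_iff)
  have indep: "std_gauss.indep_vars (\<lambda>_. borel) (\<lambda>i z. a$i * z i) I"
    using std_gauss.indep_vars_compose2[OF indep_vars_std_gauss_components, of "\<lambda>i x. a$i * x"]
    by (rule std_gauss.indep_vars_subset) auto
  have std: "distributed std_gauss lborel (\<lambda>z. z i) std_normal_density" for i :: 'd
  proof -
    have "distr std_gauss lborel (\<lambda>z. z i)
        = distr std_gauss std_normal_distribution (\<lambda>z::'d \<Rightarrow> real. z i)"
      by (rule distr_cong) auto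
    then show ?thesis unfolding distributed_def by (simp add: distr_std_gauss_component)
  qed
  have "distributed std_gauss lborel (\<lambda>z. a$i * z i) (normal_density 0 \<bar>a$i\<bar>)" if "i \<in> I" for i
    using std_gauss.normal_density_affine[OF std[of i], where \<alpha>="a$i" and \<beta>=0] that
    by (simp add: I_def)
  then have distr_sum: "distributed std_gauss lborel (\<lambda>z. \<Sum>i\<in>I. a$i * z i)
      (normal_density 0 (sqrt (\<Sum>i\<in>I. \<bar>a$i\<bar>\<^sup>2)))"
    using std_gauss.sum_indep_normal[where \<mu>="\<lambda>_. 0" and \<sigma>="\<lambda>i. \<bar>a$i\<bar>", OF _ I indep] I
    by (simp add: I_def)
  have "(\<chi> i. z i) \<bullet> a = (\<Sum>i\<in>I. a$i * z i)" for z
    unfolding inner_vec_lambda_eq_sum by (rule sum.mono_neutral_cong_right) (auto simp: I_def)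
  then have "{z. (\<chi> i. z i) \<bullet> a = c} = (\<lambda>z. \<Sum>i\<in>I. a$i * z i) -` {c} \<inter> space std_gauss"
    by auto
  moreover have "emeasure std_gauss ((\<lambda>z. \<Sum>i\<in>I. a$i * z i) -` {c} \<inter> space std_gauss) = 0"
    by (subst distributed_emeasure[OF distr_sum]) (auto intro: nn_integral_null_set)
  moreover have "(\<lambda>z. \<Sum>i\<in>I. a$i * z i) -` {c} \<inter> space std_gauss \<in> sets std_gauss"
    by measurable
  ultimately show ?thesis by (auto intro: null_setsI)
qed

lemma emeasure_std_normal_Ioo_pos:
  assumes "a < b"
  shows "0 < emeasure std_normal_distribution {a<..<b}"
proof (rule ccontr)
  assume "\<not> ?thesis"
  then have "(\<integral>\<^sup>+x. ennreal (std_normal_density x) * indicator {a<..<b} x \<partial>lborel) = 0"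
    by (subst (asm) emeasure_density) (auto simp: zero_less_iff_neq_zero)
  then have "AE x in lborel. ennreal (std_normal_density x) * indicator {a<..<b} x = 0"
    by (subst (asm) nn_integral_0_iff_AE) auto
  then have "AE x in lborel. x \<notin> {a<..<b}"
  proof eventually_elim
    case (elim x)
    then show ?case using normal_density_pos[of 1 0 x] by (auto split: split_indicator)
  qed
  then have "{a<..<b} \<in> null_sets lborel" by (subst AE_iff_null_sets) auto
  then show False using assms by (auto simp: emeasure_lborel_Ioo null_sets_def)
qed

lemma emeasure_std_gauss_box_pos:
  assumes "0 < r"
  shows "0 < emeasure (std_gauss :: ('d::finite \<Rightarrow> real) measure) {z. \<forall>i. \<bar>z i - c i\<bar> < r}"
proof -
  interpret product_prob_space "\<lambda>_::'d. std_normal_distribution"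
    unfolding product_prob_space_def product_prob_space_axioms_def product_sigma_finite_def
    by (auto intro: prob_space_std_normal_distribution prob_space_imp_sigma_finite)
  have "0 < (\<Prod>i\<in>UNIV. emeasure std_normal_distribution {c i - r<..<c i + r})"
    using emeasure_std_normal_Ioo_pos[of "c i - r" "c i + r" for i] assms
    by (auto simp: zero_less_iff_neq_zero ennreal_prod_eq_0)
  also have "\<dots> = emeasure std_gauss (PiE UNIV (\<lambda>i. {c i - r<..<c i + r}))"
    unfolding std_gauss_def by (rule emeasure_PiM[symmetric]) auto
  also have "PiE UNIV (\<lambda>i. {c i - r<..<c i + r}) = {z. \<forall>i. \<bar>z i - c i\<bar> < r}"
    by (auto simp: PiE_iff abs_diff_less_iff)
  finally show ?thesis .
qed

lemma emeasure_std_gauss_open_pos: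
  fixes U :: "(real^'d::finite) set"
  assumes "open U" "x \<in> U"
  shows "0 < emeasure std_gauss {z. (\<chi> i. z i) \<in> U}"
proof -
  obtain r where r: "0 < r" "ball x r \<subseteq> U" using assms open_contains_ball by blast
  define \<delta> where "\<delta> = r / CARD('d)"
  have "{z. \<forall>i. \<bar>z i - x $ i\<bar> < \<delta>} \<subseteq> {z. (\<chi> i. z i) \<in> U}"
  proof safe
    fix z :: "'d \<Rightarrow> real" assume z: "\<forall>i. \<bar>z i - x $ i\<bar> < \<delta>"
    have "dist x (\<chi> i. z i) \<le> (\<Sum>i\<in>UNIV. \<bar>(x - (\<chi> i. z i)) $ i\<bar>)"
      unfolding dist_norm by (rule norm_le_l1_cart)
    also have "\<dots> < (\<Sum>i\<in>(UNIV::'d set). \<delta>)"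
      using z by (intro sum_strict_mono) (auto simp: abs_minus_commute)
    also have "\<dots> = r" by (simp add: \<delta>_def)
    finally show "(\<chi> i. z i) \<in> U" using r by auto
  qed
  moreover have "{z. (\<chi> i. z i) \<in> U} \<in> sets (std_gauss :: ('d \<Rightarrow> real) measure)"
    using measurable_sets[OF measurable_std_gauss_vec borel_open[OF assms(1)]] by (simp add: vimage_def)
  ultimately have "emeasure std_gauss {z. \<forall>i. \<bar>z i - x $ i\<bar> < \<delta>} \<le> emeasure std_gauss {z. (\<chi> i. z i) \<in> U}"
    by (rule emeasure_mono)
  with r show ?thesis
    by (intro order.strict_trans2[OF emeasure_std_gauss_box_pos]) (simp_all add: \<delta>_def)
qed

section \<open>Linear functions on the probability simplex\<close>

lemma axis_in_prob_simplex: "axis y 1 \<in> prob_simplex"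
  by (auto simp: prob_simplex_def axis_def)

lemma sum_le_Max_prob_simplex:
  fixes c :: "'y::finite \<Rightarrow> real"
  assumes "q \<in> prob_simplex"
  shows "(\<Sum>y\<in>UNIV. c y * q $ y) \<le> (MAX y. c y)"
proof -
  have "(\<Sum>y\<in>UNIV. c y * q $ y) \<le> (\<Sum>y\<in>UNIV. (MAX y. c y) * q $ y)"
    using assms by (intro sum_mono mult_right_mono) (auto simp: prob_simplex_def)
  also have "\<dots> = (MAX y. c y)"
    using assms by (simp add: prob_simplex_def sum_distrib_left[symmetric])
  finally show ?thesis .
qed

lemma sum_eq_Max_prob_simplex_iff:
  fixes c :: "'y::finite \<Rightarrow> real"
  assumes q: "q \<in> prob_simplex"
  shows "(\<Sum>y\<in>UNIV. c y * q $ y) = (MAX y. c y) \<longleftrightarrow> (\<forall>y. q $ y \<noteq> 0 \<longrightarrow> c y = (MAX y. c y))"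
proof -
  have nonneg: "0 \<le> ((MAX y. c y) - c y) * q $ y" for y
    using q by (auto simp: prob_simplex_def)
  have "(MAX y. c y) - (\<Sum>y\<in>UNIV. c y * q $ y) = (\<Sum>y\<in>UNIV. ((MAX y. c y) - c y) * q $ y)"
    using q by (simp add: prob_simplex_def left_diff_distrib sum_subtractf sum_distrib_left[symmetric])
  then have "(\<Sum>y\<in>UNIV. c y * q $ y) = (MAX y. c y) \<longleftrightarrow> (\<Sum>y\<in>UNIV. ((MAX y. c y) - c y) * q $ y) = 0"
    by linarith
  also have "\<dots> \<longleftrightarrow> (\<forall>y. ((MAX y. c y) - c y) * q $ y = 0)"
    using sum_nonneg_eq_0_iff[of UNIV "\<lambda>y. ((MAX y. c y) - c y) * q $ y"] nonneg by simp
  also have "\<dots> \<longleftrightarrow> (\<forall>y. q $ y \<noteq> 0 \<longrightarrow> c y = (MAX y. c y))"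
    by (metis mult_eq_0_iff right_minus_eq)
  finally show ?thesis .
qed

lemma is_max_prob_simplex_iff:
  fixes c :: "'y::finite \<Rightarrow> real"
  shows "(q \<in> prob_simplex \<and> (\<forall>q'\<in>prob_simplex. (\<Sum>y\<in>UNIV. c y * q' $ y) \<le> (\<Sum>y\<in>UNIV. c y * q $ y)))
     \<longleftrightarrow> q \<in> prob_simplex \<and> (\<forall>y. q $ y \<noteq> 0 \<longrightarrow> c y = (MAX y. c y))"
proof -
  have "(MAX y. c y) \<in> range c" by (rule Max_in) auto
  then obtain y0 where y0: "c y0 = (MAX y. c y)" by (metis rangeE)
  have "(\<Sum>y\<in>UNIV. c y * axis y0 1 $ y) = c y0"
    by (simp add: axis_def if_distrib cong: if_cong)
  then have "(\<forall>q'\<in>prob_simplex. (\<Sum>y\<in>UNIV. c y * q' $ y) \<le> (\<Sum>y\<in>UNIV. c y * q $ y))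
      \<longleftrightarrow> (\<Sum>y\<in>UNIV. c y * q $ y) = (MAX y. c y)" if "q \<in> prob_simplex"
    using that y0 axis_in_prob_simplex[of y0] sum_le_Max_prob_simplex[of _ c]
    by (metis order.antisym order.refl)
  then show ?thesis by (auto simp: sum_eq_Max_prob_simplex_iff)
qed

text \<open>A point of the simplex supported in \<open>T\<close>; it is determined only when \<open>T\<close> is a
  singleton, but depending on \<open>T\<close> alone is what makes the perturbed argmax measurable.\<close>
definition simplex_face_point :: "'y::finite set \<Rightarrow> real^'y" where
  "simplex_face_point T = (THE q. q \<in> prob_simplex \<and> (\<forall>y. q $ y \<noteq> 0 \<longrightarrow> y \<in> T))"

lemma prob_simplex_supported_singleton_iff:
  "q \<in> prob_simplex \<and> (\<forall>k. q $ k \<noteq> 0 \<longrightarrow> k = y) \<longleftrightarrow> q = axis y 1"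
proof
  assume q: "q \<in> prob_simplex \<and> (\<forall>k. q $ k \<noteq> 0 \<longrightarrow> k = y)"
  then have "(\<Sum>k\<in>UNIV. q $ k) = q $ y" by (subst sum.remove[of _ y]) (auto intro: sum.neutral)
  then show "q = axis y 1" using q by (auto simp: prob_simplex_def vec_eq_iff axis_def)
qed (use axis_in_prob_simplex in \<open>auto simp: axis_def\<close>)

lemma The_is_max_prob_simplex:
  fixes c :: "'y::finite \<Rightarrow> real"
  shows "(THE q. q \<in> prob_simplex \<and> (\<forall>q'\<in>prob_simplex. (\<Sum>y\<in>UNIV. c y * q' $ y) \<le> (\<Sum>y\<in>UNIV. c y * q $ y)))
    = simplex_face_point {y. c y = (MAX y. c y)}"
  unfolding simplex_face_point_def is_max_prob_simplex_iff by simp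

lemma is_max_prob_simplex_strict_max:
  fixes c :: "'y::finite \<Rightarrow> real"
  assumes "\<And>k. k \<noteq> y \<Longrightarrow> c k < c y"
  shows "(q \<in> prob_simplex \<and> (\<forall>q'\<in>prob_simplex. (\<Sum>y\<in>UNIV. c y * q' $ y) \<le> (\<Sum>y\<in>UNIV. c y * q $ y)))
    \<longleftrightarrow> q = axis y 1"
proof -
  have "(MAX y. c y) = c y"
    using assms by (intro Max_eqI) (force simp: le_less)+
  then have "c k = (MAX y. c y) \<longleftrightarrow> k = y" for k
    using assms[of k] by (cases "k = y") auto
  then show ?thesis
    unfolding is_max_prob_simplex_iff prob_simplex_supported_singleton_iff[symmetric] by simp
qed

section \<open>The perturbed maximum\<close>

definition pert_score :: "real \<Rightarrow> ('y::finite \<Rightarrow> real^'d::finite) \<Rightarrow> real^'y \<Rightarrow> ('d \<Rightarrow> real) \<Rightarrow> 'y \<Rightarrow> real"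
  where "pert_score eps Y s z y = s $ y + eps * ((\<chi> i. z i) \<bullet> Y y)"

definition pert_max :: "real \<Rightarrow> ('y::finite \<Rightarrow> real^'d::finite) \<Rightarrow> real^'y \<Rightarrow> ('d \<Rightarrow> real) \<Rightarrow> real"
  where "pert_max eps Y s z = (MAX y. pert_score eps Y s z y)"

lemma Fpert_eq_integral_pert_max: "Fpert eps Y s = (\<integral>z. pert_max eps Y s z \<partial>std_gauss)"
  unfolding Fpert_def pert_max_def pert_score_def ..

lemma pert_obj_eq_sum_pert_score: "pert_obj eps Y s z q = (\<Sum>y\<in>UNIV. pert_score eps Y s z y * q $ y)"
  unfolding pert_obj_def pert_score_def ..

lemma pert_score_le_pert_max: "pert_score eps Y s z y \<le> pert_max eps Y s z"
  unfolding pert_max_def by (rule Max_ge) auto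

lemma pert_max_attained: obtains y where "pert_max eps Y s z = pert_score eps Y s z y"
proof -
  have "pert_max eps Y s z \<in> range (pert_score eps Y s z)"
    unfolding pert_max_def by (rule Max_in) auto
  then show ?thesis using that by auto
qed

lemma pert_max_le_iff: "pert_max eps Y s z \<le> c \<longleftrightarrow> (\<forall>y. pert_score eps Y s z y \<le> c)"
  unfolding pert_max_def by (subst Max_le_iff) auto

lemma measurable_pert_score [measurable]: "(\<lambda>z. pert_score eps Y s z y) \<in> borel_measurable std_gauss"
  unfolding pert_score_def by measurable

lemma measurable_pert_max [measurable]: "pert_max eps Y s \<in> borel_measurable std_gauss"
  unfolding pert_max_def by (intro borel_measurable_Max) auto

lemma integrable_pert_score: "integrable std_gauss (\<lambda>z. pert_score eps Y s z y)"
  unfolding pert_score_def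
  by (intro Bochner_Integration.integrable_add integrable_mult_right integrable_std_gauss_inner) auto

lemma integral_pert_score: "(\<integral>z. pert_score eps Y s z y \<partial>std_gauss) = s $ y"
  unfolding pert_score_def
  by (subst Bochner_Integration.integral_add)
     (auto intro!: integrable_mult_right integrable_std_gauss_inner simp: integral_std_gauss_inner)

lemma integrable_pert_max: "integrable std_gauss (pert_max eps Y s)"
proof (rule Bochner_Integration.integrable_bound)
  show "integrable std_gauss (\<lambda>z. \<Sum>y\<in>UNIV. \<bar>pert_score eps Y s z y\<bar>)"
    by (intro Bochner_Integration.integrable_sum integrable_abs integrable_pert_score)
  show "AE z in std_gauss. norm (pert_max eps Y s z) \<le> norm (\<Sum>y\<in>UNIV. \<bar>pert_score eps Y s z y\<bar>)"
  proof (rule AE_I2)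
    fix z
    obtain y where "pert_max eps Y s z = pert_score eps Y s z y" by (rule pert_max_attained)
    moreover have "\<bar>pert_score eps Y s z y\<bar> \<le> (\<Sum>y\<in>UNIV. \<bar>pert_score eps Y s z y\<bar>)"
      by (rule member_le_sum) auto
    ultimately show "norm (pert_max eps Y s z) \<le> norm (\<Sum>y\<in>UNIV. \<bar>pert_score eps Y s z y\<bar>)"
      by (simp add: sum_nonneg)
  qed
qed simp

lemma pert_max_le_add_norm: "pert_max eps Y s z \<le> pert_max eps Y s' z + norm (s - s')"
proof -
  obtain y where y: "pert_max eps Y s z = pert_score eps Y s z y" by (rule pert_max_attained)
  have "\<bar>(s - s') $ y\<bar> \<le> norm (s - s')" by (rule component_le_norm_cart)
  then have "pert_score eps Y s z y \<le> pert_score eps Y s' z y + norm (s - s')"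
    by (simp add: pert_score_def)
  also have "\<dots> \<le> pert_max eps Y s' z + norm (s - s')" by (simp add: pert_score_le_pert_max)
  finally show ?thesis by (simp add: y)
qed

lemma pert_max_lipschitz: "\<bar>pert_max eps Y s z - pert_max eps Y s' z\<bar> \<le> norm (s - s')"
  using pert_max_le_add_norm[of eps Y s z s'] pert_max_le_add_norm[of eps Y s' z s]
  by (simp add: norm_minus_commute)

lemma pert_max_convex_comb:
  assumes "0 \<le> u" "u \<le> 1"
  shows "pert_max eps Y (u *\<^sub>R s + (1 - u) *\<^sub>R s') z \<le> u * pert_max eps Y s z + (1 - u) * pert_max eps Y s' z"
  unfolding pert_max_le_iff
proof
  fix y
  have "pert_score eps Y (u *\<^sub>R s + (1 - u) *\<^sub>R s') z y = u * pert_score eps Y s z y + (1 - u) * pert_score eps Y s' z y"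
    by (simp add: pert_score_def algebra_simps)
  also have "\<dots> \<le> u * pert_max eps Y s z + (1 - u) * pert_max eps Y s' z"
    using assms by (intro add_mono mult_left_mono pert_score_le_pert_max) auto
  finally show "pert_score eps Y (u *\<^sub>R s + (1 - u) *\<^sub>R s') z y \<le> \<dots>" .
qed

lemma pert_max_add_const: "pert_max eps Y (s + c *\<^sub>R 1) z = pert_max eps Y s z + c"
proof -
  have "pert_max eps Y (s + c *\<^sub>R 1) z = (MAX y. pert_score eps Y s z y + c)"
    unfolding pert_max_def by (simp add: pert_score_def algebra_simps)
  also have "\<dots> = pert_max eps Y s z + c"
    unfolding pert_max_def by (rule Max_add_commute) auto
  finally show ?thesis .
qed

lemma Fpert_add_const: "Fpert eps Y (s + c *\<^sub>R 1) = Fpert eps Y s + c"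
  unfolding Fpert_eq_integral_pert_max pert_max_add_const
  by (subst Bochner_Integration.integral_add) (auto intro!: integrable_pert_max)

lemma Fpert_lipschitz:
  fixes Y :: "'y::finite \<Rightarrow> real^'d::finite"
  shows "1-lipschitz_on UNIV (Fpert eps Y)"
proof (rule lipschitz_onI)
  fix s s' :: "real^'y"
  have "\<bar>Fpert eps Y s - Fpert eps Y s'\<bar> = \<bar>\<integral>z. pert_max eps Y s z - pert_max eps Y s' z \<partial>std_gauss\<bar>"
    unfolding Fpert_eq_integral_pert_max
    by (subst Bochner_Integration.integral_diff) (auto intro: integrable_pert_max)
  also have "\<dots> \<le> (\<integral>z. \<bar>pert_max eps Y s z - pert_max eps Y s' z\<bar> \<partial>std_gauss)"
    by (rule integral_abs_bound)
  also have "\<dots> \<le> (\<integral>z. norm (s - s') \<partial>(std_gauss :: ('d \<Rightarrow> real) measure))"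
    by (intro Bochner_Integration.integral_mono pert_max_lipschitz)
       (auto intro!: integrable_abs Bochner_Integration.integrable_diff integrable_pert_max)
  finally show "dist (Fpert eps Y s) (Fpert eps Y s') \<le> 1 * dist s s'"
    by (simp add: dist_real_def dist_norm)
qed simp

lemma continuous_on_Fpert: "continuous_on UNIV (Fpert eps Y)"
  by (rule lipschitz_on_continuous_on[OF Fpert_lipschitz])

lemma convex_on_Fpert:
  fixes Y :: "'y::finite \<Rightarrow> real^'d::finite"
  shows "convex_on UNIV (Fpert eps Y)"
  unfolding convex_on_alt
proof (intro conjI ballI allI impI convex_UNIV)
  fix s s' :: "real^'y" and u :: real
  assume u: "0 \<le> u \<and> u \<le> 1"
  have "Fpert eps Y (u *\<^sub>R s + (1 - u) *\<^sub>R s')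
      \<le> (\<integral>z. u * pert_max eps Y s z + (1 - u) * pert_max eps Y s' z \<partial>std_gauss)"
    unfolding Fpert_eq_integral_pert_max using u
    by (intro Bochner_Integration.integral_mono pert_max_convex_comb)
       (auto intro!: integrable_pert_max Bochner_Integration.integrable_add integrable_mult_right)
  also have "\<dots> = u * Fpert eps Y s + (1 - u) * Fpert eps Y s'"
    unfolding Fpert_eq_integral_pert_max
    by (subst Bochner_Integration.integral_add) (auto intro!: integrable_pert_max integrable_mult_right)
  finally show "Fpert eps Y (u *\<^sub>R s + (1 - u) *\<^sub>R s') \<le> u * Fpert eps Y s + (1 - u) * Fpert eps Y s'" .
qed

lemma inner_le_Fpert:
  assumes "q \<in> prob_simplex"
  shows "s \<bullet> q \<le> Fpert eps Y s"
proof -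
  have "s \<bullet> q = (\<Sum>y\<in>UNIV. q $ y * (\<integral>z. pert_score eps Y s z y \<partial>std_gauss))"
    by (simp add: integral_pert_score inner_vec_def mult.commute)
  also have "\<dots> = (\<integral>z. (\<Sum>y\<in>UNIV. pert_score eps Y s z y * q $ y) \<partial>std_gauss)"
    by (subst Bochner_Integration.integral_sum)
       (auto intro!: integrable_mult_left integrable_pert_score simp: mult.commute)
  also have "\<dots> \<le> Fpert eps Y s"
    unfolding Fpert_eq_integral_pert_max pert_max_def using assms
    by (intro Bochner_Integration.integral_mono sum_le_Max_prob_simplex)
       (auto intro!: Bochner_Integration.integrable_sum integrable_mult_right integrable_pert_score
             integrable_pert_max[unfolded pert_max_def])
  finally show ?thesis .
qed

lemma Fpert_mono:
  assumes "\<And>y. s $ y \<le> s' $ y"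
  shows "Fpert eps Y s \<le> Fpert eps Y s'"
  unfolding Fpert_eq_integral_pert_max
proof (rule Bochner_Integration.integral_mono)
  fix z
  have "pert_score eps Y s z y \<le> pert_max eps Y s' z" for y
    using assms[of y] pert_score_le_pert_max[of eps Y s' z y] by (simp add: pert_score_def)
  then show "pert_max eps Y s z \<le> pert_max eps Y s' z" by (simp add: pert_max_le_iff)
qed (auto intro: integrable_pert_max)

lemma Fpert_affine_on_span_one:
  assumes "x \<in> span {1}" "x' \<in> span {1}"
  shows "Fpert eps Y (u *\<^sub>R x + (1 - u) *\<^sub>R x') = u * Fpert eps Y x + (1 - u) * Fpert eps Y x'"
proof -
  obtain a b where x: "x = a *\<^sub>R 1" and x': "x' = b *\<^sub>R 1"
    using assms by (auto simp: span_singleton)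
  have const: "Fpert eps Y (c *\<^sub>R 1) = Fpert eps Y 0 + c" for c
    using Fpert_add_const[of eps Y 0 c] by simp
  have "u *\<^sub>R x + (1 - u) *\<^sub>R x' = (u * a + (1 - u) * b) *\<^sub>R 1"
    by (simp add: x x' algebra_simps)
  then have "Fpert eps Y (u *\<^sub>R x + (1 - u) *\<^sub>R x') = Fpert eps Y 0 + (u * a + (1 - u) * b)"
    by (simp only: const)
  also have "\<dots> = u * Fpert eps Y x + (1 - u) * Fpert eps Y x'"
    by (simp add: x x' const algebra_simps)
  finally show ?thesis .
qed

lemma inner_one_eq_sum: "(1 :: real^'y::finite) \<bullet> q = (\<Sum>y\<in>UNIV. q $ y)"
  by (simp add: inner_vec_def)

lemma Fpert_split_proj_ones:
  fixes Y :: "'y::finite \<Rightarrow> real^'d::finite"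
  assumes "q0 \<in> prob_simplex"
  shows "Fpert eps Y s = proj_ones s \<bullet> q0 + Fpert eps Y (s - proj_ones s)"
proof -
  define m where "m = (\<Sum>y\<in>UNIV. s $ y) / real CARD('y)"
  have p: "proj_ones s = m *\<^sub>R 1" by (simp add: proj_ones_def m_def)
  have "Fpert eps Y s = Fpert eps Y ((s - proj_ones s) + m *\<^sub>R 1)" by (simp add: p)
  also have "\<dots> = Fpert eps Y (s - proj_ones s) + m" by (rule Fpert_add_const)
  also have "m = proj_ones s \<bullet> q0" using assms by (simp add: p inner_one_eq_sum prob_simplex_def)
  finally show ?thesis by simp
qed

section \<open>Differentiability\<close>

definition pert_argmax :: "real \<Rightarrow> ('y::finite \<Rightarrow> real^'d::finite) \<Rightarrow> real^'y \<Rightarrow> ('d \<Rightarrow> real) \<Rightarrow> real^'y"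
  where "pert_argmax eps Y s z =
    (THE q. q \<in> prob_simplex \<and> (\<forall>q'\<in>prob_simplex. pert_obj eps Y s z q' \<le> pert_obj eps Y s z q))"

definition pert_grad :: "real \<Rightarrow> ('y::finite \<Rightarrow> real^'d::finite) \<Rightarrow> real^'y \<Rightarrow> real^'y"
  where "pert_grad eps Y s = (\<integral>z. pert_argmax eps Y s z \<partial>std_gauss)"

lemma pert_argmax_eq_simplex_face_point:
  "pert_argmax eps Y s z = simplex_face_point {y. pert_score eps Y s z y = pert_max eps Y s z}"
  unfolding pert_argmax_def pert_obj_eq_sum_pert_score The_is_max_prob_simplex pert_max_def ..

lemma pert_argmax_strict_max:
  assumes "\<And>k. k \<noteq> y \<Longrightarrow> pert_score eps Y s z k < pert_score eps Y s z y"
  shows "\<exists>!q. q \<in> prob_simplex \<and> (\<forall>q'\<in>prob_simplex. pert_obj eps Y s z q' \<le> pert_obj eps Y s z q)"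
    and "pert_argmax eps Y s z = axis y 1"
  using is_max_prob_simplex_strict_max[of y "pert_score eps Y s z", OF assms]
  unfolding pert_argmax_def pert_obj_eq_sum_pert_score by auto

lemma measurable_pert_argmax [measurable]:
  fixes Y :: "'y::finite \<Rightarrow> real^'d::finite"
  shows "pert_argmax eps Y s \<in> borel_measurable std_gauss"
proof -
  let ?T = "\<lambda>z. {y. pert_score eps Y s z y = pert_max eps Y s z}"
  have "?T \<in> std_gauss \<rightarrow>\<^sub>M count_space UNIV"
  proof (subst measurable_count_space_eq2, safe)
    fix T :: "'y set"
    have "?T -` {T} \<inter> space std_gauss = {z \<in> space std_gauss.
        (\<forall>y\<in>T. pert_score eps Y s z y - pert_max eps Y s z = 0) \<and>
        (\<forall>y\<in>-T. pert_score eps Y s z y - pert_max eps Y s z \<noteq> 0)}"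
      by auto
    also have "\<dots> \<in> sets std_gauss" by measurable
    finally show "?T -` {T} \<inter> space std_gauss \<in> sets std_gauss" .
  qed auto
  then show ?thesis
    unfolding pert_argmax_eq_simplex_face_point[abs_def]
    by (rule measurable_compose) (simp add: measurable_count_space_eq1)
qed

lemma integrable_pert_argmax:
  fixes Y :: "'y::finite \<Rightarrow> real^'d::finite"
  shows "integrable std_gauss (pert_argmax eps Y s)"
proof (rule std_gauss.integrable_const_bound[OF AE_I2])
  fix z
  show "norm (pert_argmax eps Y s z) \<le> (MAX T. norm (simplex_face_point T :: real^'y))"
    unfolding pert_argmax_eq_simplex_face_point by (rule Max_ge) auto
qed simp

text \<open>The value \<open>1\<close> on the diagonal only keeps the minimum well defined when \<open>'y\<close> is a
  singleton; perturbing \<open>s\<close> by less than half the gap does not move the maximiser.\<close>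
definition pert_gap :: "real \<Rightarrow> ('y::finite \<Rightarrow> real^'d::finite) \<Rightarrow> real^'y \<Rightarrow> ('d \<Rightarrow> real) \<Rightarrow> real"
  where "pert_gap eps Y s z = (MIN p. if fst p = snd p then 1
           else \<bar>pert_score eps Y s z (fst p) - pert_score eps Y s z (snd p)\<bar>)"

lemma measurable_pert_gap [measurable]: "pert_gap eps Y s \<in> borel_measurable std_gauss"
  unfolding pert_gap_def by (intro borel_measurable_Min) auto

lemma pert_gap_le:
  assumes "y \<noteq> y'"
  shows "pert_gap eps Y s z \<le> \<bar>pert_score eps Y s z y - pert_score eps Y s z y'\<bar>"
  unfolding pert_gap_def using assms
  by (intro Min_le) (auto intro!: image_eqI[where x="(y, y')"])

lemma pert_gap_pos_strict_max:
  assumes "0 < pert_gap eps Y s z"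
  obtains y where "pert_max eps Y s z = pert_score eps Y s z y"
    and "\<And>k. k \<noteq> y \<Longrightarrow> pert_score eps Y s z k < pert_score eps Y s z y"
proof -
  obtain y where y: "pert_max eps Y s z = pert_score eps Y s z y" by (rule pert_max_attained)
  have "pert_score eps Y s z k < pert_score eps Y s z y" if "k \<noteq> y" for k
    using pert_score_le_pert_max[of eps Y s z k] pert_gap_le[OF that, of eps Y s z] assms y
    by auto
  with y that show ?thesis by blast
qed

lemma pert_max_add_small:
  assumes y: "pert_max eps Y s z = pert_score eps Y s z y"
    and k: "2 * norm k < pert_gap eps Y s z"
  shows "pert_max eps Y (s + k) z = pert_max eps Y s z + k $ y"
proof -
  have "pert_score eps Y (s + k) z y' \<le> pert_score eps Y (s + k) z y" for y'
  proof (cases "y' = y")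
    case False
    have "pert_score eps Y s z y' \<le> pert_score eps Y s z y"
      using pert_score_le_pert_max[of eps Y s z y'] y by simp
    moreover have "pert_gap eps Y s z \<le> \<bar>pert_score eps Y s z y - pert_score eps Y s z y'\<bar>"
      using pert_gap_le False by metis
    moreover have "\<bar>k $ y'\<bar> \<le> norm k" "\<bar>k $ y\<bar> \<le> norm k"
      by (auto intro: component_le_norm_cart)
    ultimately show ?thesis using k by (simp add: pert_score_def)
  qed simp
  then have "pert_max eps Y (s + k) z = pert_score eps Y (s + k) z y"
    by (meson pert_max_le_iff pert_score_le_pert_max order.antisym)
  then show ?thesis by (simp add: y pert_score_def)
qed

lemma pert_max_first_order:
  assumes "0 < pert_gap eps Y s z"
  shows "\<bar>pert_max eps Y (s + k) z - pert_max eps Y s z - pert_argmax eps Y s z \<bullet> k\<bar>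
    \<le> 2 * norm k * indicator {z. pert_gap eps Y s z \<le> 2 * norm k} z"
proof -
  obtain y where y: "pert_max eps Y s z = pert_score eps Y s z y"
    and strict: "\<And>k. k \<noteq> y \<Longrightarrow> pert_score eps Y s z k < pert_score eps Y s z y"
    using pert_gap_pos_strict_max[OF assms] by blast
  have argmax_k: "pert_argmax eps Y s z \<bullet> k = k $ y"
    using pert_argmax_strict_max(2)[OF strict] by (simp add: inner_axis')
  show ?thesis
  proof (cases "pert_gap eps Y s z \<le> 2 * norm k")
    case True
    have "\<bar>pert_max eps Y (s + k) z - pert_max eps Y s z\<bar> \<le> norm k"
      using pert_max_lipschitz[of eps Y "s + k" z s] by simp
    moreover have "\<bar>k $ y\<bar> \<le> norm k" by (rule component_le_norm_cart)
    ultimately show ?thesis using True by (simp add: argmax_k)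
  next
    case False
    then show ?thesis using pert_max_add_small[OF y] by (simp add: argmax_k)
  qed
qed

lemma pert_argmax_far_dominant:
  assumes "norm s \<le> R" "\<forall>k. k \<noteq> y \<longrightarrow> 2 * R < eps * ((\<chi> i. z i) \<bullet> (Y y - Y k))"
  shows "pert_argmax eps Y s z = axis y 1"
proof (rule pert_argmax_strict_max(2))
  fix k assume "k \<noteq> y"
  moreover have "\<bar>s $ k\<bar> \<le> norm s" "\<bar>s $ y\<bar> \<le> norm s" by (auto intro: component_le_norm_cart)
  ultimately show "pert_score eps Y s z k < pert_score eps Y s z y"
    using assms by (auto simp: pert_score_def inner_diff_right algebra_simps)
qed

locale gaussian_perturbation =
  fixes Y :: "'y::finite \<Rightarrow> real^'d::finite" and eps :: real
  assumes inj_Y: "inj Y" and eps_nonzero: "eps \<noteq> 0"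
begin

lemma AE_pert_gap_pos: "AE z in std_gauss. 0 < pert_gap eps Y s z"
proof -
  have "AE z in std_gauss. pert_score eps Y s z y \<noteq> pert_score eps Y s z y'" if "y \<noteq> y'" for y y'
  proof (rule AE_I')
    let ?a = "eps *\<^sub>R (Y y - Y y')"
    have "?a \<noteq> 0" using inj_Y eps_nonzero that by (auto dest: injD)
    then show "{z. (\<chi> i. z i) \<bullet> ?a = s $ y' - s $ y} \<in> null_sets std_gauss"
      by (rule std_gauss_hyperplane_null)
  qed (auto simp: pert_score_def inner_diff_right algebra_simps)
  then have "AE z in std_gauss. \<forall>p\<in>UNIV. fst p \<noteq> snd p \<longrightarrow>
      pert_score eps Y s z (fst p) \<noteq> pert_score eps Y s z (snd p)"
    by (intro AE_finite_allI) auto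
  then show ?thesis
    by eventually_elim (auto simp: pert_gap_def Min_gr_iff)
qed

lemma AE_unique_pert_argmax:
  "AE z in std_gauss. \<exists>!q. q \<in> prob_simplex \<and>
     (\<forall>q'\<in>prob_simplex. pert_obj eps Y s z q' \<le> pert_obj eps Y s z q)"
  using AE_pert_gap_pos[of s]
  by eventually_elim (metis pert_gap_pos_strict_max pert_argmax_strict_max(1))

lemma measure_pert_gap_le_tendsto_0:
  "((\<lambda>t. measure std_gauss {z. pert_gap eps Y s z \<le> t}) \<longlongrightarrow> 0) (at_right 0)"
proof -
  interpret real_distribution "distr std_gauss borel (pert_gap eps Y s)"
    by (rule std_gauss.real_distribution_distr) simp
  have cdf_eq: "cdf (distr std_gauss borel (pert_gap eps Y s)) = (\<lambda>t. measure std_gauss {z. pert_gap eps Y s z \<le> t})"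
    unfolding cdf_def by (subst measure_distr) (auto simp: vimage_def)
  have "measure std_gauss {z. pert_gap eps Y s z \<le> 0} = 0"
    using std_gauss.prob_eq_0_AE[OF AE_pert_gap_pos[of s, THEN AE_mp, OF AE_I2]] by (simp add: not_le)
  then show ?thesis
    using cdf_is_right_cont[of 0] by (simp add: continuous_within cdf_eq)
qed

lemma Fpert_first_order_bound:
  "\<bar>Fpert eps Y (s + k) - Fpert eps Y s - pert_grad eps Y s \<bullet> k\<bar>
    \<le> 2 * norm k * measure std_gauss {z. pert_gap eps Y s z \<le> 2 * norm k}"
proof -
  have gap_set: "{z \<in> space std_gauss. pert_gap eps Y s z \<le> 2 * norm k} \<in> sets std_gauss" by measurable
  have "pert_grad eps Y s \<bullet> k = (\<integral>z. pert_argmax eps Y s z \<bullet> k \<partial>std_gauss)"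
    unfolding pert_grad_def by (rule integral_inner_left[symmetric]) (rule integrable_pert_argmax)
  then have "Fpert eps Y (s + k) - Fpert eps Y s - pert_grad eps Y s \<bullet> k
      = (\<integral>z. pert_max eps Y (s + k) z - pert_max eps Y s z - pert_argmax eps Y s z \<bullet> k \<partial>std_gauss)"
    unfolding Fpert_eq_integral_pert_max
    by (simp add: Bochner_Integration.integral_diff Bochner_Integration.integrable_diff
        integrable_pert_max integrable_inner_left integrable_pert_argmax)
  also have "\<bar>\<dots>\<bar> \<le> (\<integral>z. \<bar>pert_max eps Y (s + k) z - pert_max eps Y s z - pert_argmax eps Y s z \<bullet> k\<bar> \<partial>std_gauss)"
    by (rule integral_abs_bound)
  also have "\<dots> \<le> (\<integral>z. 2 * norm k * indicator {z. pert_gap eps Y s z \<le> 2 * norm k} z \<partial>std_gauss)"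
    using AE_pert_gap_pos[of s] gap_set
    by (intro integral_mono_AE integrable_abs Bochner_Integration.integrable_diff integrable_pert_max
        integrable_inner_left integrable_pert_argmax integrable_mult_right integrable_real_indicator)
       (auto simp: std_gauss.emeasure_eq_measure elim!: eventually_mono intro: pert_max_first_order)
  also have "\<dots> = 2 * norm k * measure std_gauss {z. pert_gap eps Y s z \<le> 2 * norm k}"
    using gap_set by simp
  finally show ?thesis .
qed

text \<open>The bound above is \<open>o(\<parallel>k\<parallel>)\<close> because ties have probability zero.\<close>
lemma has_derivative_Fpert: "(Fpert eps Y has_derivative (\<lambda>h. pert_grad eps Y s \<bullet> h)) (at s)"
proof -
  let ?P = "\<lambda>t. measure std_gauss {z. pert_gap eps Y s z \<le> t}"
  have "filterlim (\<lambda>x. 2 * norm (x - s)) (at_right 0) (at s)"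
    by (rule tendsto_imp_filterlim_at_right)
       (auto intro!: tendsto_eq_intros simp: eventually_at_filter)
  then have lim: "((\<lambda>x. 2 * ?P (2 * norm (x - s))) \<longlongrightarrow> 0) (at s)"
    using filterlim_compose[OF measure_pert_gap_le_tendsto_0] tendsto_mult_right_zero by blast
  have "norm (Fpert eps Y x - Fpert eps Y s - pert_grad eps Y s \<bullet> (x - s)) / norm (x - s)
      \<le> 2 * ?P (2 * norm (x - s))" if "x \<noteq> s" for x
    using Fpert_first_order_bound[of s "x - s"] that
    by (simp add: divide_le_eq mult.commute mult.left_commute)
  then have "\<forall>\<^sub>F x in at s. norm (norm (Fpert eps Y x - Fpert eps Y s - pert_grad eps Y s \<bullet> (x - s)) / norm (x - s))
      \<le> 2 * ?P (2 * norm (x - s))"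
    by (auto simp: eventually_at_filter)
  from Lim_null_comparison[OF this lim] show ?thesis
    unfolding has_derivative_iff_norm using bounded_linear_inner_right by blast
qed

end

section \<open>Strict convexity\<close>

lemma Fpert_convex_comb_less:
  assumes u: "0 \<le> u" "u \<le> 1" and S: "S \<in> sets std_gauss" "emeasure std_gauss S \<noteq> 0"
    and less: "\<And>z. z \<in> S \<Longrightarrow> pert_max eps Y (u *\<^sub>R s + (1 - u) *\<^sub>R s') z
      < u * pert_max eps Y s z + (1 - u) * pert_max eps Y s' z"
  shows "Fpert eps Y (u *\<^sub>R s + (1 - u) *\<^sub>R s') < u * Fpert eps Y s + (1 - u) * Fpert eps Y s'"
proof -
  have "(\<integral>z. pert_max eps Y (u *\<^sub>R s + (1 - u) *\<^sub>R s') z \<partial>std_gauss)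
      < (\<integral>z. u * pert_max eps Y s z + (1 - u) * pert_max eps Y s' z \<partial>std_gauss)"
    using less u
    by (intro std_gauss.integral_less_AE[OF _ _ S(2,1)] AE_I2 impI)
       (auto intro!: integrable_pert_max Bochner_Integration.integrable_add integrable_mult_right
         pert_max_convex_comb less_imp_neq)
  also have "\<dots> = u * Fpert eps Y s + (1 - u) * Fpert eps Y s'"
    unfolding Fpert_eq_integral_pert_max
    by (subst Bochner_Integration.integral_add) (auto intro!: integrable_pert_max integrable_mult_right)
  finally show ?thesis by (simp add: Fpert_eq_integral_pert_max)
qed

lemma convex_simplex_dir: "convex simplex_dir"
  unfolding convex_def simplex_dir_def by (auto simp: sum.distrib sum_distrib_left[symmetric])

lemma separating_direction_from_convex_hull:
  fixes p :: "'a::euclidean_space"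
  assumes "finite S" "p \<notin> convex hull S"
  shows "\<exists>x. \<forall>k\<in>S. R < x \<bullet> (p - k)"
proof -
  have "convex (convex hull S)" "closed (convex hull S)"
    using assms(1) by (auto intro!: compact_imp_closed finite_imp_compact_convex_hull)
  from separating_hyperplane_closed_point[OF this assms(2)]
  obtain a b where ab: "a \<bullet> p < b" "\<forall>x\<in>convex hull S. b < a \<bullet> x" by blast
  define t where "t = (\<bar>R\<bar> + 1) / (b - a \<bullet> p)"
  have t: "0 < t" "t * (b - a \<bullet> p) = \<bar>R\<bar> + 1" using ab(1) by (auto simp: t_def)
  have "R < (- t *\<^sub>R a) \<bullet> (p - k)" if "k \<in> S" for k
  proof -
    have "b < a \<bullet> k" using ab(2) hull_inc[OF that] by blast
    then have "t * (b - a \<bullet> p) \<le> t * (a \<bullet> k - a \<bullet> p)" using t(1) by simp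
    then show ?thesis using t(2) by (simp add: inner_diff_right algebra_simps)
  qed
  then show ?thesis by blast
qed

lemma continuous_on_MAX:
  fixes f :: "'i \<Rightarrow> 'a::topological_space \<Rightarrow> real"
  assumes "finite K" "K \<noteq> {}" "\<And>k. k \<in> K \<Longrightarrow> continuous_on S (f k)"
  shows "continuous_on S (\<lambda>x. MAX k\<in>K. f k x)"
  using assms by (induction K rule: finite_ne_induct) (auto intro!: continuous_on_max)

lemma nonconstant_vec_argmax_gap:
  fixes v :: "real^'y::finite"
  assumes "v $ y1 \<noteq> v $ y2"
  obtains K vm \<Delta> where "K \<noteq> {}" "-K \<noteq> {}" "0 < \<Delta>"
    "\<And>y. y \<in> K \<Longrightarrow> v $ y = vm" "\<And>y. y \<notin> K \<Longrightarrow> v $ y \<le> vm - \<Delta>"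
proof -
  define vm where "vm = (MAX y. v $ y)"
  define K where "K = {y. v $ y = vm}"
  have le: "v $ y \<le> vm" for y unfolding vm_def by (rule Max_ge) auto
  have "vm \<in> range (\<lambda>y. v $ y)" unfolding vm_def by (rule Max_in) auto
  then have K: "K \<noteq> {}" by (auto simp: K_def)
  have notK: "-K \<noteq> {}" using assms unfolding K_def by (metis (mono_tags) ComplI empty_iff mem_Collect_eq)
  define \<Delta> where "\<Delta> = (MIN y\<in>-K. vm - v $ y)"
  have \<Delta>: "0 < \<Delta>" unfolding \<Delta>_def using notK le by (subst Min_gr_iff) (auto simp: K_def less_le)
  have off_K: "v $ y \<le> vm - \<Delta>" if "y \<notin> K" for y
  proof -
    have "\<Delta> \<le> vm - v $ y" unfolding \<Delta>_def using that by (intro Min_le) auto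
    then show ?thesis by simp
  qed
  show ?thesis by (rule that[OF K notK \<Delta> _ off_K]) (simp add: K_def)
qed

lemma simplex_dir_diff_nonconstant:
  fixes s s' :: "real^'y::finite"
  assumes "s \<in> simplex_dir" "s' \<in> simplex_dir" "s \<noteq> s'"
  shows "\<exists>y1 y2. (s - s') $ y1 \<noteq> (s - s') $ y2"
proof (rule ccontr)
  assume "\<not> ?thesis"
  then have const: "(s - s') $ y = (s - s') $ y0" for y y0 by auto
  have "(\<Sum>y\<in>UNIV. (s - s') $ y) = (\<Sum>y\<in>(UNIV::'y set). (s - s') $ y0)" for y0
    by (rule sum.cong) (use const in auto)
  then have "(\<Sum>y\<in>UNIV. (s - s') $ y) = real CARD('y) * (s - s') $ y0" for y0
    by simp
  moreover have "(\<Sum>y\<in>UNIV. (s - s') $ y) = 0"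
    using assms by (simp add: simplex_dir_def sum_subtractf)
  ultimately have "(s - s') $ y0 = 0" for y0 by simp
  then show False using assms(3) by (simp add: vec_eq_iff)
qed

lemma max_le_convex_comb_add_abs:
  fixes a b u :: real
  assumes "0 \<le> u" "u \<le> 1"
  shows "max a b \<le> u * a + (1 - u) * b + \<bar>a - b\<bar>"
proof (cases "a \<le> b")
  case True
  have "u * (b - a) \<le> b - a" using True assms by (simp add: mult_left_le_one_le)
  then show ?thesis using True by (simp add: max_def algebra_simps)
next
  case False
  have "(1 - u) * (a - b) \<le> a - b" using False assms by (simp add: mult_left_le_one_le)
  then show ?thesis using False by (simp add: max_def algebra_simps)
qed

text \<open>If \<open>a - b\<close> takes its maximum \<open>v\<close> exactly on \<open>K\<close> and the best indices of the convex
  combination inside and outside \<open>K\<close> are nearly tied, then \<open>a\<close> is large inside \<open>K\<close> and \<open>b\<close> is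
  large outside \<open>K\<close>, which makes Jensen's inequality for the maximum strict by about
  \<open>u (1 - u) \<Delta>\<close>.\<close>
lemma Max_convex_comb_less:
  fixes a b :: "'y::finite \<Rightarrow> real"
  assumes u: "0 < u" "u < 1" and K: "K \<noteq> {}" "-K \<noteq> {}"
    and on_K: "\<And>y. y \<in> K \<Longrightarrow> a y - b y = v"
    and off_K: "\<And>y. y \<notin> K \<Longrightarrow> a y - b y \<le> v - \<Delta>"
    and tie: "\<bar>(MAX y\<in>K. u * a y + (1 - u) * b y) - (MAX y\<in>-K. u * a y + (1 - u) * b y)\<bar> < u * (1 - u) * \<Delta>"
  shows "(MAX y. u * a y + (1 - u) * b y) < u * (MAX y. a y) + (1 - u) * (MAX y. b y)"
proof -
  define m where "m y = u * a y + (1 - u) * b y" for y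
  define A where "A = (MAX y\<in>K. m y)"
  define B where "B = (MAX y\<in>-K. m y)"
  have "A \<in> m ` K" "B \<in> m ` (-K)" unfolding A_def B_def using K by (auto intro!: Max_in)
  then obtain k k' where k: "k \<in> K" "A = m k" and k': "k' \<notin> K" "B = m k'" by auto
  have max_a: "a k \<le> (MAX y. a y)" and max_b: "b k' \<le> (MAX y. b y)" by (auto intro!: Max_ge)
  have "u * (a k' - b k') \<le> u * (v - \<Delta>)"
    using off_K[OF k'(1)] u by (intro mult_left_mono) auto
  moreover have "B = b k' + u * (a k' - b k')" by (simp add: k'(2) m_def algebra_simps)
  ultimately have B: "B - u * (v - \<Delta>) \<le> (MAX y. b y)" using max_b by linarith
  have A: "A + (1 - u) * v \<le> (MAX y. a y)"
    using on_K[OF k(1)] k(2) max_a by (simp add: m_def algebra_simps)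
  have "u * A + (1 - u) * B + u * (1 - u) * \<Delta> = u * (A + (1 - u) * v) + (1 - u) * (B - u * (v - \<Delta>))"
    by (simp add: algebra_simps)
  also have "\<dots> \<le> u * (MAX y. a y) + (1 - u) * (MAX y. b y)"
    using A B u by (intro add_mono mult_left_mono) auto
  finally have jensen_gap: "u * A + (1 - u) * B + u * (1 - u) * \<Delta> \<le> u * (MAX y. a y) + (1 - u) * (MAX y. b y)" .
  have "range m = m ` K \<union> m ` (-K)" by auto
  then have "(MAX y. m y) = max A B" using K by (simp add: A_def B_def Max_Un)
  also have "\<dots> \<le> u * A + (1 - u) * B + \<bar>A - B\<bar>"
    using u by (intro max_le_convex_comb_add_abs) auto
  finally have "(MAX y. m y) \<le> u * A + (1 - u) * B + \<bar>A - B\<bar>" .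
  moreover have "\<bar>A - B\<bar> < u * (1 - u) * \<Delta>" using tie by (simp only: A_def B_def m_def)
  ultimately have "(MAX y. m y) < u * (MAX y. a y) + (1 - u) * (MAX y. b y)" using jensen_gap by linarith
  then show ?thesis by (simp only: m_def)
qed

locale exposed_gaussian_perturbation =
  fixes Y :: "'y::finite \<Rightarrow> real^'d::finite" and eps :: real
  assumes no_conv: "\<And>y. Y y \<notin> convex hull (Y ` (UNIV - {y}))"
    and eps_pos: "eps > 0"

sublocale exposed_gaussian_perturbation \<subseteq> gaussian_perturbation
proof
  show "inj Y"
  proof (rule injI, rule ccontr)
    fix y y' assume "Y y = Y y'" "y \<noteq> y'"
    then have "Y y \<in> convex hull (Y ` (UNIV - {y}))" by (intro hull_inc) auto
    with no_conv show False by blast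
  qed
qed (use eps_pos in simp)

context exposed_gaussian_perturbation
begin

lemma exposing_direction: "\<exists>x. \<forall>k. k \<noteq> y \<longrightarrow> R < eps * (x \<bullet> (Y y - Y k))"
proof -
  have "finite (Y ` (UNIV - {y}))" by simp
  then obtain x where x: "\<forall>k\<in>Y ` (UNIV - {y}). R / eps < x \<bullet> (Y y - k)"
    using separating_direction_from_convex_hull[OF _ no_conv] by blast
  have "R < eps * (x \<bullet> (Y y - Y k))" if "k \<noteq> y" for k
    using x that eps_pos by (auto simp: divide_less_eq mult.commute)
  then show ?thesis by blast
qed

lemma exists_dominating_direction: "\<exists>x. \<forall>k. k \<noteq> y \<longrightarrow> m $ k + eps * (x \<bullet> Y k) < m $ y + eps * (x \<bullet> Y y)"
proof -
  obtain x where x: "\<And>k. k \<noteq> y \<Longrightarrow> 2 * norm m < eps * (x \<bullet> (Y y - Y k))"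
    using exposing_direction[of y "2 * norm m"] by blast
  have "m $ k + eps * (x \<bullet> Y k) < m $ y + eps * (x \<bullet> Y y)" if "k \<noteq> y" for k
  proof -
    have "\<bar>m $ k\<bar> \<le> norm m" "\<bar>m $ y\<bar> \<le> norm m" by (auto intro: component_le_norm_cart)
    then show ?thesis using x[OF that] by (simp add: inner_diff_right algebra_simps)
  qed
  then show ?thesis by blast
qed

lemma exists_block_Max_ge:
  assumes "y0 \<in> A" "-A \<noteq> {}"
  shows "\<exists>x. (MAX y\<in>-A. m $ y + eps * (x \<bullet> Y y)) \<le> (MAX y\<in>A. m $ y + eps * (x \<bullet> Y y))"
proof -
  obtain x where x: "\<forall>k. k \<noteq> y0 \<longrightarrow> m $ k + eps * (x \<bullet> Y k) < m $ y0 + eps * (x \<bullet> Y y0)"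
    using exists_dominating_direction by blast
  then have "m $ k + eps * (x \<bullet> Y k) \<le> m $ y0 + eps * (x \<bullet> Y y0)" for k
    by (cases "k = y0") (auto intro: less_imp_le)
  then have "(MAX y\<in>-A. m $ y + eps * (x \<bullet> Y y)) \<le> m $ y0 + eps * (x \<bullet> Y y0)"
    using assms(2) by (subst Max_le_iff) auto
  also have "\<dots> \<le> (MAX y\<in>A. m $ y + eps * (x \<bullet> Y y))" using assms(1) by (intro Max_ge) auto
  finally show ?thesis by blast
qed

lemma emeasure_dominating_set_pos: "0 < emeasure std_gauss {z. \<forall>k. k \<noteq> y \<longrightarrow> R < eps * ((\<chi> i. z i) \<bullet> (Y y - Y k))}"
proof -
  define U where "U = {x. \<forall>k. k \<noteq> y \<longrightarrow> R < eps * (x \<bullet> (Y y - Y k))}"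
  obtain x where "x \<in> U" unfolding U_def using exposing_direction by blast
  moreover have "U = (\<Inter>k\<in>-{y}. {x. R < eps * (x \<bullet> (Y y - Y k))})" by (auto simp: U_def)
  then have "open U" by (auto intro!: open_INT open_Collect_less continuous_intros)
  moreover have "{z. \<forall>k. k \<noteq> y \<longrightarrow> R < eps * ((\<chi> i. z i) \<bullet> (Y y - Y k))} = {z. (\<chi> i. z i) \<in> U}"
    by (simp add: U_def)
  ultimately show ?thesis by (simp only:) (rule emeasure_std_gauss_open_pos)
qed

text \<open>Each block can be made to dominate, so by the intermediate value theorem the difference
  of the block maxima vanishes at some point and is small on an open neighbourhood of it.\<close>
lemma emeasure_near_tie_pos:
  assumes K: "K \<noteq> {}" "-K \<noteq> {}" and c: "0 < c"
  shows "0 < emeasure std_gauss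
    {z. \<bar>(MAX y\<in>K. pert_score eps Y m z y) - (MAX y\<in>-K. pert_score eps Y m z y)\<bar> < c}"
proof -
  define g where "g x = (MAX y\<in>K. m $ y + eps * (x \<bullet> Y y)) - (MAX y\<in>-K. m $ y + eps * (x \<bullet> Y y))" for x
  have cont: "continuous_on UNIV g"
    unfolding g_def using K by (intro continuous_on_diff continuous_on_MAX continuous_intros) auto
  obtain y1 y2 where y: "y1 \<in> K" "y2 \<in> -K" using K by blast
  have "\<exists>x. (MAX y\<in>-K. m $ y + eps * (x \<bullet> Y y)) \<le> (MAX y\<in>K. m $ y + eps * (x \<bullet> Y y))"
    using y(1) K(2) by (rule exists_block_Max_ge)
  moreover have "\<exists>x. (MAX y\<in>K. m $ y + eps * (x \<bullet> Y y)) \<le> (MAX y\<in>-K. m $ y + eps * (x \<bullet> Y y))"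
    using exists_block_Max_ge[of y2 "-K"] y(2) K(1) by simp
  ultimately have sign: "\<exists>x. 0 \<le> g x" "\<exists>x. g x \<le> 0" by (auto simp: g_def)
  obtain x1 x2 where "0 \<le> g x1" "g x2 \<le> 0" using sign by blast
  then have "0 \<in> range g"
    using connected_ivt_hyperplane[OF connected_continuous_image[OF cont connected_UNIV], of "g x2" "g x1" 1 0]
    by (auto simp: inner_real_def)
  then obtain x0 where "g x0 = 0" by auto
  moreover have "open {x. \<bar>g x\<bar> < c}"
    by (intro open_Collect_less continuous_on_rabs cont continuous_on_const)
  ultimately have "0 < emeasure std_gauss {z. (\<chi> i. z i) \<in> {x. \<bar>g x\<bar> < c}}"
    using c by (intro emeasure_std_gauss_open_pos[of _ x0]) auto
  moreover have "(MAX y\<in>K. pert_score eps Y m z y) - (MAX y\<in>-K. pert_score eps Y m z y) = g (\<chi> i. z i)" for z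
    unfolding g_def pert_score_def ..
  ultimately show ?thesis by simp
qed

lemma strictly_convex_on_Fpert: "strictly_convex_on simplex_dir (Fpert eps Y)"
  unfolding strictly_convex_on_def
proof (intro conjI convex_simplex_dir ballI allI impI)
  fix s s' :: "real^'y" and u :: real
  assume ss: "s \<in> simplex_dir" "s' \<in> simplex_dir" and hu: "s \<noteq> s' \<and> 0 < u \<and> u < 1"
  then have u: "0 < u" "u < 1" by auto
  define m where "m = u *\<^sub>R s + (1 - u) *\<^sub>R s'"
  obtain y1 y2 where "(s - s') $ y1 \<noteq> (s - s') $ y2"
    using simplex_dir_diff_nonconstant[OF ss hu[THEN conjunct1]] by blast
  then obtain K v \<Delta> where K: "K \<noteq> {}" "-K \<noteq> {}" and \<Delta>: "0 < \<Delta>"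
    and on_K: "\<And>y. y \<in> K \<Longrightarrow> (s - s') $ y = v" and off_K: "\<And>y. y \<notin> K \<Longrightarrow> (s - s') $ y \<le> v - \<Delta>"
    by (elim nonconstant_vec_argmax_gap) blast
  define S where "S = {z. \<bar>(MAX y\<in>K. pert_score eps Y m z y) - (MAX y\<in>-K. pert_score eps Y m z y)\<bar> < u * (1 - u) * \<Delta>}"
  have "{z \<in> space std_gauss. \<bar>(MAX y\<in>K. pert_score eps Y m z y) - (MAX y\<in>-K. pert_score eps Y m z y)\<bar>
      < u * (1 - u) * \<Delta>} \<in> sets std_gauss"
    by measurable
  then have "S \<in> sets std_gauss" by (simp add: S_def)
  moreover have "emeasure std_gauss S \<noteq> 0"
    unfolding S_def using emeasure_near_tie_pos[OF K, of "u * (1 - u) * \<Delta>" m] u \<Delta> by auto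
  moreover have score_m: "pert_score eps Y m z y = u * pert_score eps Y s z y + (1 - u) * pert_score eps Y s' z y"
    for z y
    by (simp add: m_def pert_score_def algebra_simps)
  moreover have "pert_max eps Y m z < u * pert_max eps Y s z + (1 - u) * pert_max eps Y s' z" if "z \<in> S" for z
  proof -
    have "pert_score eps Y s z y - pert_score eps Y s' z y = (s - s') $ y" for y
      by (simp add: pert_score_def)
    with that on_K off_K show ?thesis
      unfolding pert_max_def score_m
      by (intro Max_convex_comb_less[OF u K, where v=v and \<Delta>=\<Delta>]) (simp_all add: S_def score_m)
  qed
  ultimately show "Fpert eps Y (u *\<^sub>R s + (1 - u) *\<^sub>R s') < u * Fpert eps Y s + (1 - u) * Fpert eps Y s'"
    using u by (intro Fpert_convex_comb_less) (auto simp: m_def)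
qed

end

section \<open>The conjugate and its Legendre property\<close>

lemma fenchel_conj_eq_infinity:
  assumes "\<And>r. \<exists>s. r < s \<bullet> q - f s"
  shows "fenchel_conj f q = \<infinity>"
  unfolding fenchel_conj_def
proof (rule SUP_PInfty)
  fix n :: nat
  obtain s where "real n < s \<bullet> q - f s" using assms by blast
  then show "\<exists>s\<in>UNIV. ereal (real n) \<le> ereal (s \<bullet> q - f s)" by (intro bexI[of _ s]) auto
qed

lemma fenchel_conj_Fpert_le_0:
  assumes "q \<in> prob_simplex"
  shows "fenchel_conj (Fpert eps Y) q \<le> 0"
  unfolding fenchel_conj_def by (rule SUP_least) (use inner_le_Fpert[OF assms] in auto)

lemma fenchel_conj_Fpert_outside_prob_simplex:
  fixes Y :: "'y::finite \<Rightarrow> real^'d::finite"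
  assumes "q \<notin> prob_simplex"
  shows "fenchel_conj (Fpert eps Y) q = \<infinity>"
proof -
  consider y where "q $ y < 0" | "(\<Sum>y\<in>UNIV. q $ y) \<noteq> 1"
    using assms by (auto simp: prob_simplex_def not_le)
  then show ?thesis
  proof cases
    case (1 y)
    show ?thesis
    proof (rule fenchel_conj_eq_infinity)
      fix r
      define t where "t = (\<bar>r\<bar> + \<bar>Fpert eps Y 0\<bar> + 1) / (- q $ y)"
      have "0 < t" unfolding t_def using 1 by (intro divide_pos_pos) auto
      then have "Fpert eps Y (- t *\<^sub>R axis y 1) \<le> Fpert eps Y 0"
        by (intro Fpert_mono) (auto simp: axis_def)
      moreover have "(- t *\<^sub>R axis y 1) \<bullet> q = \<bar>r\<bar> + \<bar>Fpert eps Y 0\<bar> + 1"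
        using 1 by (simp add: t_def inner_axis')
      ultimately show "\<exists>s. r < s \<bullet> q - Fpert eps Y s" by (intro exI[of _ "- t *\<^sub>R axis y 1"]) linarith
    qed
  next
    case 2
    show ?thesis
    proof (rule fenchel_conj_eq_infinity)
      fix r
      define t where "t = (\<bar>r\<bar> + \<bar>Fpert eps Y 0\<bar> + 1) / ((\<Sum>y\<in>UNIV. q $ y) - 1)"
      have "(t *\<^sub>R 1) \<bullet> q - Fpert eps Y (t *\<^sub>R 1) = t * ((\<Sum>y\<in>UNIV. q $ y) - 1) - Fpert eps Y 0"
        using Fpert_add_const[of eps Y 0 t] by (simp add: inner_one_eq_sum algebra_simps)
      also have "t * ((\<Sum>y\<in>UNIV. q $ y) - 1) = \<bar>r\<bar> + \<bar>Fpert eps Y 0\<bar> + 1"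
        using 2 by (simp add: t_def)
      finally show "\<exists>s. r < s \<bullet> q - Fpert eps Y s" by (intro exI[of _ "t *\<^sub>R 1"]) linarith
    qed
  qed
qed

lemma dom_fenchel_conj_Fpert:
  fixes Y :: "'y::finite \<Rightarrow> real^'d::finite"
  shows "{q. fenchel_conj (Fpert eps Y) q \<noteq> \<infinity>} = prob_simplex"
  using fenchel_conj_Fpert_le_0[of _ eps Y] fenchel_conj_Fpert_outside_prob_simplex[of _ eps Y]
  by force

lemma component_le_Fpert: "s $ y \<le> Fpert eps Y s"
  using inner_le_Fpert[OF axis_in_prob_simplex[of y], of s eps Y] by (simp add: inner_axis)

text \<open>On \<open>V\<^sub>\<Delta>\<close> the largest coordinate of \<open>s\<close> controls \<open>\<parallel>s\<parallel>\<close>, and \<open>F(s)\<close> dominates it while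
  \<open>s \<bullet> q\<close> lags behind it by a multiple of the smallest weight of \<open>q\<close>.\<close>
lemma inner_minus_Fpert_le_neg_norm:
  fixes Y :: "'y::finite \<Rightarrow> real^'d::finite"
  assumes s: "s \<in> simplex_dir" and q: "q \<in> prob_simplex" and q_ge: "\<And>y. \<delta> \<le> q $ y" and "0 \<le> \<delta>"
  shows "s \<bullet> q - Fpert eps Y s \<le> - (\<delta> / 2) * norm s"
proof -
  have s0: "(\<Sum>y\<in>UNIV. s $ y) = 0" using s by (simp add: simplex_dir_def)
  have q1: "(\<Sum>y\<in>UNIV. q $ y) = 1" using q by (simp add: prob_simplex_def)
  define ms where "ms = (MAX y. s $ y)"
  have s_le: "s $ y \<le> ms" for y unfolding ms_def by (rule Max_ge) auto
  have "ms \<in> range (\<lambda>y. s $ y)" unfolding ms_def by (rule Max_in) auto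
  then have ms_le_F: "ms \<le> Fpert eps Y s" using component_le_Fpert by fastforce
  have "s \<bullet> q - ms = (\<Sum>y\<in>UNIV. (s $ y - ms) * q $ y)"
    by (simp add: inner_vec_def left_diff_distrib sum_subtractf sum_distrib_left[symmetric] q1)
  also have "\<dots> \<le> (\<Sum>y\<in>UNIV. (s $ y - ms) * \<delta>)"
    by (intro sum_mono mult_left_mono_neg q_ge) (use s_le in auto)
  also have "\<dots> = - (real CARD('y) * ms * \<delta>)"
    by (simp add: sum_distrib_right[symmetric] sum_subtractf s0)
  finally have inner_le: "s \<bullet> q - ms \<le> - (real CARD('y) * ms * \<delta>)" .
  have "0 \<le> ms"
  proof (rule ccontr)
    assume "\<not> 0 \<le> ms"
    then have "(\<Sum>y\<in>UNIV. s $ y) < (\<Sum>y\<in>(UNIV::'y set). 0)"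
      using s_le by (intro sum_strict_mono) (auto intro: le_less_trans[of _ ms])
    then show False using s0 by simp
  qed
  have "(\<Sum>y\<in>UNIV. \<bar>s $ y\<bar>) = (\<Sum>y\<in>UNIV. 2 * max (s $ y) 0 - s $ y)"
    by (intro sum.cong) auto
  also have "\<dots> = 2 * (\<Sum>y\<in>UNIV. max (s $ y) 0)"
    by (simp add: sum_subtractf s0 sum_distrib_left)
  also have "\<dots> \<le> 2 * (\<Sum>y\<in>(UNIV::'y set). ms)"
    using s_le \<open>0 \<le> ms\<close> by (intro mult_left_mono sum_mono) auto
  finally have "norm s \<le> 2 * real CARD('y) * ms"
    using norm_le_l1_cart[of s] by simp
  then have "\<delta> * norm s \<le> \<delta> * (2 * real CARD('y) * ms)" using \<open>0 \<le> \<delta>\<close> by (rule mult_left_mono)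
  then show ?thesis using inner_le ms_le_F by (simp add: algebra_simps)
qed

definition pos_simplex :: "(real^'y::finite) set" where
  "pos_simplex = {q. (\<forall>y. 0 < q $ y) \<and> (\<Sum>y\<in>UNIV. q $ y) = 1}"

lemma pos_simplex_nonempty: "(pos_simplex :: (real^'y::finite) set) \<noteq> {}"
proof -
  have "(\<chi> y. 1 / real CARD('y)) \<in> (pos_simplex :: (real^'y) set)"
    unfolding pos_simplex_def by simp
  then show ?thesis by blast
qed

lemma pos_simplex_subset_prob_simplex: "pos_simplex \<subseteq> prob_simplex"
  by (auto simp: pos_simplex_def prob_simplex_def less_imp_le)

lemma convex_pos_simplex: "convex pos_simplex"
  unfolding convex_def
proof (intro ballI allI impI)
  fix x y :: "real^'y" and u v :: real
  assume x: "x \<in> pos_simplex" and y: "y \<in> pos_simplex" and uv: "0 \<le> u" "0 \<le> v" "u + v = 1"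
  have "0 < (u *\<^sub>R x + v *\<^sub>R y) $ i" for i
  proof (cases "u = 0")
    case True then show ?thesis using y uv by (simp add: pos_simplex_def)
  next
    case False
    then have "0 < u * x $ i" using x uv by (simp add: pos_simplex_def)
    moreover have "0 \<le> v * y $ i" using y uv by (simp add: less_imp_le pos_simplex_def)
    ultimately show ?thesis by simp
  qed
  moreover have "(\<Sum>i\<in>UNIV. (u *\<^sub>R x + v *\<^sub>R y) $ i) = 1"
    using x y uv by (simp add: pos_simplex_def sum.distrib sum_distrib_left[symmetric])
  ultimately show "u *\<^sub>R x + v *\<^sub>R y \<in> pos_simplex" by (simp add: pos_simplex_def)
qed

lemma closed_simplex_dir: "closed (simplex_dir :: (real^'y::finite) set)"
  unfolding simplex_dir_def by (intro closed_Collect_eq continuous_intros)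

lemma closed_simplex_hull_ge: "closed {x \<in> simplex_hull. \<forall>y. \<delta> \<le> (x :: real^'y::finite) $ y}"
  unfolding simplex_hull_def mem_Collect_eq
  by (intro closed_Collect_conj closed_Collect_eq closed_Collect_all closed_Collect_le continuous_intros)

lemma closed_prob_simplex: "closed (prob_simplex :: (real^'y::finite) set)"
  unfolding prob_simplex_def
  by (intro closed_Collect_conj closed_Collect_eq closed_Collect_all closed_Collect_le continuous_intros)

lemma pos_simplex_margin:
  assumes "q \<in> pos_simplex"
  obtains \<delta> where "0 < \<delta>" "\<And>y. \<delta> \<le> q $ y"
proof
  show "0 < (MIN y. q $ y)" using assms by (simp add: pos_simplex_def)
  show "(MIN y. q $ y) \<le> q $ y" for y by (rule Min_le) auto
qed

lemma ball_inter_simplex_hull_not_subset: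
  assumes q: "q \<in> prob_simplex" and qy: "q $ y = 0" and e: "0 < e"
  shows "\<not> ball q e \<inter> simplex_hull \<subseteq> prob_simplex"
proof
  assume sub: "ball q e \<inter> simplex_hull \<subseteq> prob_simplex"
  have "(\<Sum>i\<in>UNIV. q $ i) = 1" using q by (simp add: prob_simplex_def)
  then obtain y' where y': "q $ y' \<noteq> 0" by (metis (no_types) sum.neutral zero_neq_one)
  with qy have "y' \<noteq> y" by auto
  define x where "x = q + (e / 3) *\<^sub>R (axis y' 1 - axis y 1)"
  have "norm (x - q) \<le> (e / 3) * (norm (axis y' (1::real)) + norm (axis y (1::real)))"
    using e norm_triangle_ineq4[of "axis y' (1::real)" "axis y 1"] by (simp add: x_def)
  then have "x \<in> ball q e" using e by (simp add: dist_norm norm_minus_commute norm_axis_1)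
  moreover have "(\<Sum>i\<in>UNIV. x $ i) = 1 \<bullet> q + (e / 3) * (1 \<bullet> axis y' (1::real) - 1 \<bullet> axis y (1::real))"
    unfolding inner_one_eq_sum[symmetric] x_def by (simp add: inner_add_right inner_diff_right)
  then have "x \<in> simplex_hull"
    using q by (simp add: simplex_hull_def prob_simplex_def inner_one_eq_sum inner_axis)
  ultimately have "x \<in> prob_simplex" using sub by auto
  moreover have "x $ y = - (e / 3)" using \<open>y' \<noteq> y\<close> by (simp add: x_def qy axis_def)
  ultimately show False using e by (auto simp: prob_simplex_def dest: spec[of _ y])
qed

lemma interior_rel_prob_simplex:
  "interior_rel simplex_hull prob_simplex = (pos_simplex :: (real^'y::finite) set)"
proof
  show "interior_rel simplex_hull prob_simplex \<subseteq> pos_simplex"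
  proof
    fix q assume "q \<in> interior_rel simplex_hull prob_simplex"
    then obtain e where q: "q \<in> prob_simplex" and e: "0 < e" "ball q e \<inter> simplex_hull \<subseteq> prob_simplex"
      by (auto simp: interior_rel_def)
    have "0 < q $ y" for y
      using ball_inter_simplex_hull_not_subset[OF q _ e(1), of y] e(2) q
      by (fastforce simp: prob_simplex_def less_le)
    then show "q \<in> pos_simplex" using q by (simp add: pos_simplex_def prob_simplex_def)
  qed
next
  show "pos_simplex \<subseteq> interior_rel simplex_hull prob_simplex"
  proof
    fix q assume q: "q \<in> pos_simplex"
    obtain \<delta> where \<delta>: "0 < \<delta>" "\<And>y. \<delta> \<le> q $ y" using pos_simplex_margin[OF q] by blast
    have "0 \<le> x $ y" if "x \<in> ball q \<delta>" for x y
      using that component_le_norm_cart[of "q - x" y] \<delta>(2)[of y] by (simp add: dist_norm)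
    then have "ball q \<delta> \<inter> simplex_hull \<subseteq> prob_simplex"
      by (auto simp: prob_simplex_def simplex_hull_def)
    then show "q \<in> interior_rel simplex_hull prob_simplex"
      using q \<delta>(1) pos_simplex_subset_prob_simplex by (auto simp: interior_rel_def)
  qed
qed

lemma at_within_simplex_hull_eq:
  fixes q :: "real^'y::finite"
  assumes "0 < \<delta>" "\<And>y. 2 * \<delta> \<le> q $ y"
  shows "at q within simplex_hull = at q within {x \<in> simplex_hull. \<forall>y. \<delta> \<le> x $ y}"
proof (rule at_within_nhd[of _ "ball q \<delta>"])
  have "\<delta> \<le> x $ y" if "x \<in> ball q \<delta>" for x y
    using that component_le_norm_cart[of "q - x" y] assms(2)[of y] by (simp add: dist_norm)
  then show "simplex_hull \<inter> ball q \<delta> - {q} = {x \<in> simplex_hull. \<forall>y. \<delta> \<le> x $ y} \<inter> ball q \<delta> - {q}"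
    by auto
qed (use assms(1) in simp_all)

lemma eventually_pos_simplex:
  fixes q :: "real^'y::finite"
  assumes "q \<in> pos_simplex"
  shows "eventually (\<lambda>x. x \<in> pos_simplex) (at q within simplex_hull)"
proof -
  obtain \<delta> where \<delta>: "0 < \<delta>" "\<And>y. \<delta> \<le> q $ y" using pos_simplex_margin[OF assms] by blast
  let ?S = "{x \<in> simplex_hull. \<forall>y. \<delta> / 2 \<le> x $ y}"
  have "eventually (\<lambda>x. x \<in> ?S) (at q within ?S)"
    using eventually_at_ball'[of 1 q ?S] by (rule eventually_mono) auto
  then have "eventually (\<lambda>x. x \<in> ?S) (at q within simplex_hull)"
    using at_within_simplex_hull_eq[of "\<delta> / 2" q] \<delta> by simp
  then show ?thesis
    by (rule eventually_mono) (use \<delta>(1) in \<open>auto simp: pos_simplex_def simplex_hull_def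
        intro: less_le_trans[of 0 "\<delta> / 2"]\<close>)
qed

lemma proj_ones_diff_in_simplex_dir: "s - proj_ones s \<in> simplex_dir"
proof -
  have "(\<Sum>y\<in>UNIV. (s - proj_ones s) $ y)
      = (\<Sum>y\<in>UNIV. s $ y) - real CARD('a) * ((\<Sum>y\<in>UNIV. s $ y) / real CARD('a))"
    by (simp add: proj_ones_def sum_subtractf)
  then show ?thesis by (simp add: simplex_dir_def)
qed

lemma exists_max_inner_minus_Fpert:
  fixes Y :: "'y::finite \<Rightarrow> real^'d::finite"
  assumes q: "q \<in> prob_simplex" and \<delta>: "0 < \<delta>" "\<And>y. \<delta> \<le> q $ y"
  shows "\<exists>s\<in>simplex_dir. \<forall>s'. s' \<bullet> q - Fpert eps Y s' \<le> s \<bullet> q - Fpert eps Y s"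
proof -
  define K where "K = simplex_dir \<inter> cball (0::real^'y) (2 * Fpert eps Y 0 / \<delta>)"
  have "compact K" unfolding K_def by (intro closed_Int_compact closed_simplex_dir compact_cball)
  moreover have "0 \<in> K"
    using component_le_Fpert[of 0 _ eps Y] \<delta> by (auto simp: K_def simplex_dir_def)
  moreover have "continuous_on K (\<lambda>s. s \<bullet> q - Fpert eps Y s)"
    by (intro continuous_intros continuous_on_subset[OF continuous_on_Fpert]) auto
  ultimately obtain s0 where s0: "s0 \<in> K" "\<And>s. s \<in> K \<Longrightarrow> s \<bullet> q - Fpert eps Y s \<le> s0 \<bullet> q - Fpert eps Y s0"
    using continuous_attains_sup[of K] by blast
  have "s' \<bullet> q - Fpert eps Y s' \<le> s0 \<bullet> q - Fpert eps Y s0" for s'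
  proof -
    define s'' where "s'' = s' - proj_ones s'"
    have s'': "s'' \<in> simplex_dir" by (simp add: s''_def proj_ones_diff_in_simplex_dir)
    have "s' \<bullet> q - Fpert eps Y s' = s'' \<bullet> q - Fpert eps Y s''"
      using Fpert_split_proj_ones[OF q, of eps Y s'] by (simp add: s''_def inner_diff_left)
    moreover have "s'' \<bullet> q - Fpert eps Y s'' \<le> s0 \<bullet> q - Fpert eps Y s0"
    proof (cases "s'' \<in> K")
      case False
      then have "2 * Fpert eps Y 0 / \<delta> < norm s''" using s'' by (auto simp: K_def)
      then have "- (\<delta> / 2) * norm s'' < 0 \<bullet> q - Fpert eps Y 0" using \<delta> by (simp add: field_simps)
      moreover have "s'' \<bullet> q - Fpert eps Y s'' \<le> - (\<delta> / 2) * norm s''"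
        using \<delta> by (intro inner_minus_Fpert_le_neg_norm[OF s'' q]) auto
      ultimately show ?thesis using s0(2)[OF \<open>0 \<in> K\<close>] by linarith
    qed (use s0 in auto)
    ultimately show ?thesis by simp
  qed
  then show ?thesis using s0(1) by (auto simp: K_def)
qed

context exposed_gaussian_perturbation
begin

text \<open>For \<open>q\<close> in the simplex the objective is invariant under adding multiples of \<open>1\<close>, so the
  maximiser is normalised to lie in \<open>V\<^sub>\<Delta>\<close>.\<close>
definition conj_argmax :: "real^'y \<Rightarrow> real^'y" where
  "conj_argmax q = (THE s. s \<in> simplex_dir \<and> (\<forall>s'. s' \<bullet> q - Fpert eps Y s' \<le> s \<bullet> q - Fpert eps Y s))"

lemma max_inner_minus_Fpert_unique:
  assumes s1: "s1 \<in> simplex_dir" "\<And>s'. s' \<bullet> q - Fpert eps Y s' \<le> s1 \<bullet> q - Fpert eps Y s1"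
    and s2: "s2 \<in> simplex_dir" "\<And>s'. s' \<bullet> q - Fpert eps Y s' \<le> s2 \<bullet> q - Fpert eps Y s2"
  shows "s1 = s2"
proof (rule ccontr)
  assume "s1 \<noteq> s2"
  define m where "m = (1/2) *\<^sub>R s1 + (1 - 1/2) *\<^sub>R s2"
  have "\<And>x y u. x \<in> simplex_dir \<Longrightarrow> y \<in> simplex_dir \<Longrightarrow> x \<noteq> y \<Longrightarrow> 0 < u \<Longrightarrow> u < 1 \<Longrightarrow>
      Fpert eps Y (u *\<^sub>R x + (1 - u) *\<^sub>R y) < u * Fpert eps Y x + (1 - u) * Fpert eps Y y"
    using strictly_convex_on_Fpert unfolding strictly_convex_on_def by blast
  from this[OF s1(1) s2(1) \<open>s1 \<noteq> s2\<close>, of "1/2"]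
  have "2 * Fpert eps Y m < Fpert eps Y s1 + Fpert eps Y s2" by (simp add: m_def)
  moreover have "2 * (m \<bullet> q) = s1 \<bullet> q + s2 \<bullet> q" by (simp add: m_def inner_add_left)
  moreover have "m \<bullet> q - Fpert eps Y m \<le> s1 \<bullet> q - Fpert eps Y s1" by (rule s1(2))
  moreover have "s1 \<bullet> q - Fpert eps Y s1 = s2 \<bullet> q - Fpert eps Y s2"
    using s1(2) s2(2) by (meson order.antisym)
  ultimately show False by linarith
qed

lemma pert_grad_eq_if_max:
  assumes "\<And>s'. s' \<bullet> q - Fpert eps Y s' \<le> s \<bullet> q - Fpert eps Y s"
  shows "pert_grad eps Y s = q"
proof -
  have "((\<lambda>s. s \<bullet> q - Fpert eps Y s) has_derivative (\<lambda>h. h \<bullet> q - pert_grad eps Y s \<bullet> h)) (at s)"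
    by (intro has_derivative_diff bounded_linear_imp_has_derivative bounded_linear_inner_left has_derivative_Fpert)
  then have "(\<lambda>h. h \<bullet> q - pert_grad eps Y s \<bullet> h) = (\<lambda>h. 0)"
    by (rule differential_zero_maxmin[of s UNIV, rotated 2]) (use assms in auto)
  then have "(q - pert_grad eps Y s) \<bullet> q - pert_grad eps Y s \<bullet> (q - pert_grad eps Y s) = 0" by metis
  then have "(q - pert_grad eps Y s) \<bullet> (q - pert_grad eps Y s) = 0"
    by (simp add: inner_diff_left inner_diff_right inner_commute)
  then show ?thesis by simp
qed

lemma conj_argmax:
  assumes "q \<in> pos_simplex"
  shows "conj_argmax q \<in> simplex_dir"
    and "\<And>s'. s' \<bullet> q - Fpert eps Y s' \<le> conj_argmax q \<bullet> q - Fpert eps Y (conj_argmax q)"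
proof -
  obtain \<delta> where "0 < \<delta>" "\<And>y. \<delta> \<le> q $ y" using pos_simplex_margin[OF assms] by blast
  then have "\<exists>!s. s \<in> simplex_dir \<and> (\<forall>s'. s' \<bullet> q - Fpert eps Y s' \<le> s \<bullet> q - Fpert eps Y s)"
    using exists_max_inner_minus_Fpert assms pos_simplex_subset_prob_simplex max_inner_minus_Fpert_unique
    by blast
  from theI'[OF this] show "conj_argmax q \<in> simplex_dir"
    "\<And>s'. s' \<bullet> q - Fpert eps Y s' \<le> conj_argmax q \<bullet> q - Fpert eps Y (conj_argmax q)"
    unfolding conj_argmax_def by auto
qed

lemma conj_argmax_eqI:
  assumes "q \<in> pos_simplex" "s \<in> simplex_dir" "\<And>s'. s' \<bullet> q - Fpert eps Y s' \<le> s \<bullet> q - Fpert eps Y s"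
  shows "conj_argmax q = s"
  using max_inner_minus_Fpert_unique[OF conj_argmax[OF assms(1)] assms(2,3)] .

lemma pert_grad_conj_argmax: "q \<in> pos_simplex \<Longrightarrow> pert_grad eps Y (conj_argmax q) = q"
  by (rule pert_grad_eq_if_max) (rule conj_argmax)

lemma fenchel_conj_Fpert_eq:
  assumes "q \<in> pos_simplex"
  shows "fenchel_conj (Fpert eps Y) q = ereal (conj_argmax q \<bullet> q - Fpert eps Y (conj_argmax q))"
  unfolding fenchel_conj_def
  by (rule SUP_eqI) (use conj_argmax(2)[OF assms] in auto)

lemma norm_conj_argmax_le:
  assumes "q \<in> pos_simplex" "0 < \<delta>" "\<And>y. \<delta> \<le> q $ y"
  shows "norm (conj_argmax q) \<le> 2 * Fpert eps Y 0 / \<delta>"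
proof -
  have "- Fpert eps Y 0 \<le> conj_argmax q \<bullet> q - Fpert eps Y (conj_argmax q)"
    using conj_argmax(2)[OF assms(1), of 0] by simp
  also have "\<dots> \<le> - (\<delta> / 2) * norm (conj_argmax q)"
    using assms pos_simplex_subset_prob_simplex
    by (intro inner_minus_Fpert_le_neg_norm conj_argmax(1)) auto
  finally show ?thesis using assms(2) by (simp add: field_simps)
qed

text \<open>On a compact part of the relative interior the maximisers stay in a compact set, and the
  graph of \<open>conj_argmax\<close> is closed, being cut out by the continuous constraints of maximality.\<close>
lemma continuous_on_conj_argmax:
  assumes "0 < \<delta>"
  shows "continuous_on {x \<in> simplex_hull. \<forall>y. \<delta> \<le> x $ y} conj_argmax"
proof -
  define S where "S = {x \<in> (simplex_hull :: (real^'y) set). \<forall>y. \<delta> \<le> x $ y}"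
  have S_pos: "S \<subseteq> pos_simplex"
    using assms by (auto simp: S_def pos_simplex_def simplex_hull_def intro: less_le_trans)
  define T where "T = simplex_dir \<inter> cball (0::real^'y) (2 * Fpert eps Y 0 / \<delta>)"
  have "conj_argmax \<in> S \<rightarrow> T"
    using S_pos norm_conj_argmax_le[OF _ assms] conj_argmax(1) by (fastforce simp: S_def T_def)
  moreover have "compact T" unfolding T_def by (intro closed_Int_compact closed_simplex_dir compact_cball)
  moreover have "(\<lambda>x. (x, conj_argmax x)) ` S
      = (S \<times> simplex_dir) \<inter> {p. \<forall>s'. s' \<bullet> fst p - Fpert eps Y s' \<le> snd p \<bullet> fst p - Fpert eps Y (snd p)}"
    using S_pos conj_argmax conj_argmax_eqI by (auto simp: image_iff)
  moreover have "closed {p :: (real^'y) \<times> (real^'y). \<forall>s'. s' \<bullet> fst p - Fpert eps Y s' \<le> snd p \<bullet> fst p - Fpert eps Y (snd p)}"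
    by (intro closed_Collect_all closed_Collect_le continuous_intros
        continuous_on_compose2[OF continuous_on_Fpert]) auto
  ultimately show ?thesis
    unfolding S_def[symmetric] using S_def closed_simplex_hull_ge closed_simplex_dir
    by (intro continuous_from_closed_graph[of T]) (auto intro!: closed_Int closed_Times)
qed

lemma tendsto_conj_argmax:
  assumes q: "q \<in> pos_simplex"
  shows "(conj_argmax \<longlongrightarrow> conj_argmax q) (at q within simplex_hull)"
proof -
  obtain \<delta> where \<delta>: "0 < \<delta>" "\<And>y. \<delta> \<le> q $ y" using pos_simplex_margin[OF q] by blast
  define S where "S = {x \<in> (simplex_hull :: (real^'y) set). \<forall>y. \<delta> / 2 \<le> x $ y}"
  have "continuous_on S conj_argmax" unfolding S_def by (rule continuous_on_conj_argmax) (use \<delta> in simp)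
  moreover have "\<delta> / 2 \<le> q $ y" for y using \<delta>(1) \<delta>(2)[of y] by linarith
  then have "q \<in> S" using q by (auto simp: S_def pos_simplex_def simplex_hull_def)
  ultimately have "(conj_argmax \<longlongrightarrow> conj_argmax q) (at q within S)" by (simp add: continuous_on_def)
  then show ?thesis using at_within_simplex_hull_eq[of "\<delta> / 2" q] \<delta> by (simp add: S_def)
qed

lemma strictly_convex_on_fenchel_conj_Fpert:
  "strictly_convex_on pos_simplex (\<lambda>q. real_of_ereal (fenchel_conj (Fpert eps Y) q))"
  unfolding strictly_convex_on_def
proof (intro conjI convex_pos_simplex ballI allI impI)
  fix q1 q2 :: "real^'y" and u :: real
  assume q1: "q1 \<in> pos_simplex" and q2: "q2 \<in> pos_simplex" and h: "q1 \<noteq> q2 \<and> 0 < u \<and> u < 1"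
  define q where "q = u *\<^sub>R q1 + (1 - u) *\<^sub>R q2"
  have q: "q \<in> pos_simplex" unfolding q_def by (rule convexD[OF convex_pos_simplex q1 q2]) (use h in auto)
  define s where "s = conj_argmax q"
  have conj_eq: "real_of_ereal (fenchel_conj (Fpert eps Y) p) = conj_argmax p \<bullet> p - Fpert eps Y (conj_argmax p)"
    if "p \<in> pos_simplex" for p
    by (simp add: fenchel_conj_Fpert_eq[OF that])
  have le2: "s \<bullet> q2 - Fpert eps Y s \<le> real_of_ereal (fenchel_conj (Fpert eps Y) q2)"
    using conj_argmax(2)[OF q2] by (simp add: conj_eq[OF q2])
  \<comment> \<open>Equality would make \<open>s\<close> a maximiser for \<open>q1\<close>, forcing \<open>q1 = \<nabla>F(s) = q\<close>.\<close>
  have lt1: "s \<bullet> q1 - Fpert eps Y s < real_of_ereal (fenchel_conj (Fpert eps Y) q1)"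
  proof (rule ccontr)
    assume "\<not> ?thesis"
    then have "s' \<bullet> q1 - Fpert eps Y s' \<le> s \<bullet> q1 - Fpert eps Y s" for s'
      using conj_argmax(2)[OF q1, of s'] conj_eq[OF q1] by linarith
    then have "pert_grad eps Y s = q1" by (rule pert_grad_eq_if_max)
    then have "q1 = q" using pert_grad_conj_argmax[OF q] by (simp add: s_def)
    then have "(1 - u) *\<^sub>R (q1 - q2) = 0" by (simp add: q_def algebra_simps)
    then show False using h by auto
  qed
  have "real_of_ereal (fenchel_conj (Fpert eps Y) q) = s \<bullet> q - Fpert eps Y s"
    using conj_eq[OF q] by (simp add: s_def)
  also have "\<dots> = u * (s \<bullet> q1 - Fpert eps Y s) + (1 - u) * (s \<bullet> q2 - Fpert eps Y s)"
    by (simp add: q_def inner_add_right algebra_simps)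
  also have "\<dots> < u * real_of_ereal (fenchel_conj (Fpert eps Y) q1) + (1 - u) * real_of_ereal (fenchel_conj (Fpert eps Y) q2)"
    using lt1 le2 h by (intro add_less_le_mono mult_strict_left_mono mult_left_mono) auto
  finally show "real_of_ereal (fenchel_conj (Fpert eps Y) (u *\<^sub>R q1 + (1 - u) *\<^sub>R q2))
      < u * real_of_ereal (fenchel_conj (Fpert eps Y) q1) + (1 - u) * real_of_ereal (fenchel_conj (Fpert eps Y) q2)"
    by (simp add: q_def)
qed

text \<open>The supporting lines at \<open>q\<close> and at \<open>q'\<close> sandwich the remainder between \<open>0\<close> and
  \<open>(s(q') - s(q)) \<bullet> (q' - q)\<close>, which is \<open>o(\<parallel>q' - q\<parallel>)\<close> by continuity of \<open>conj_argmax\<close>.\<close>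
lemma has_derivative_fenchel_conj_Fpert:
  assumes q: "q \<in> pos_simplex"
  shows "((\<lambda>q. real_of_ereal (fenchel_conj (Fpert eps Y) q)) has_derivative (\<lambda>h. conj_argmax q \<bullet> h))
    (at q within simplex_hull)"
  unfolding has_derivative_iff_norm
proof (intro conjI bounded_linear_inner_right)
  define \<Omega> where "\<Omega> p = real_of_ereal (fenchel_conj (Fpert eps Y) p)" for p
  have \<Omega>_eq: "\<Omega> p = conj_argmax p \<bullet> p - Fpert eps Y (conj_argmax p)" if "p \<in> pos_simplex" for p
    by (simp add: \<Omega>_def fenchel_conj_Fpert_eq[OF that])
  have remainder: "norm (\<Omega> p - \<Omega> q - conj_argmax q \<bullet> (p - q)) / norm (p - q) \<le> norm (conj_argmax p - conj_argmax q)"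
    if p: "p \<in> pos_simplex" for p
  proof -
    have "\<Omega> q + conj_argmax q \<bullet> (p - q) \<le> \<Omega> p"
      using conj_argmax(2)[OF p, of "conj_argmax q"]
      by (simp add: \<Omega>_eq p q inner_diff_right)
    moreover have "\<Omega> p - conj_argmax p \<bullet> (p - q) \<le> \<Omega> q"
      using conj_argmax(2)[OF q, of "conj_argmax p"]
      by (simp add: \<Omega>_eq p q inner_diff_right)
    ultimately have "\<bar>\<Omega> p - \<Omega> q - conj_argmax q \<bullet> (p - q)\<bar> \<le> (conj_argmax p - conj_argmax q) \<bullet> (p - q)"
      by (simp add: inner_diff_left)
    also have "\<dots> \<le> norm (conj_argmax p - conj_argmax q) * norm (p - q)"
      by (rule Cauchy_Schwarz_ineq2[THEN order_trans[OF abs_ge_self]])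
    finally show ?thesis
      by (cases "p = q") (simp_all add: divide_le_eq)
  qed
  have "((\<lambda>p. norm (conj_argmax p - conj_argmax q)) \<longlongrightarrow> 0) (at q within simplex_hull)"
    using tendsto_conj_argmax[OF q] by (simp add: LIM_zero tendsto_norm_zero)
  then show "((\<lambda>p. norm (\<Omega> p - \<Omega> q - conj_argmax q \<bullet> (p - q)) / norm (p - q)) \<longlongrightarrow> 0)
      (at q within simplex_hull)"
    by (rule Lim_null_comparison[rotated])
       (use eventually_pos_simplex[OF q] in \<open>eventually_elim, use remainder in simp\<close>)
qed

lemma pert_grad_component_ge:
  assumes "norm s \<le> R"
  shows "measure std_gauss {z. \<forall>k. k \<noteq> y \<longrightarrow> 2 * R < eps * ((\<chi> i. z i) \<bullet> (Y y - Y k))} \<le> pert_grad eps Y s $ y"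
proof -
  define E where "E = {z. \<forall>k. k \<noteq> y \<longrightarrow> 2 * R < eps * ((\<chi> i. z i) \<bullet> (Y y - Y k))}"
  have "{z \<in> space std_gauss. \<forall>k. k \<noteq> y \<longrightarrow> 2 * R < eps * ((\<chi> i. z i) \<bullet> (Y y - Y k))} \<in> sets std_gauss"
    by measurable
  then have E: "E \<in> sets std_gauss" by (simp add: E_def)
  have "pert_grad eps Y s $ y = pert_grad eps Y s \<bullet> axis y 1" by (simp add: inner_axis)
  also have "\<dots> = (\<integral>z. pert_argmax eps Y s z \<bullet> axis y 1 \<partial>std_gauss)"
    unfolding pert_grad_def by (rule integral_inner_left[symmetric]) (rule integrable_pert_argmax)
  also have "\<dots> \<ge> (\<integral>z. indicator E z \<partial>std_gauss)"
  proof (rule integral_mono_AE)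
    show "integrable std_gauss (indicator E :: _ \<Rightarrow> real)"
      using E by (intro integrable_real_indicator) (auto simp: std_gauss.emeasure_eq_measure)
    show "integrable std_gauss (\<lambda>z. pert_argmax eps Y s z \<bullet> axis y 1)"
      by (intro integrable_inner_left integrable_pert_argmax)
    show "AE z in std_gauss. indicator E z \<le> pert_argmax eps Y s z \<bullet> axis y 1"
      using AE_pert_gap_pos[of s]
    proof eventually_elim
      case (elim z)
      then obtain y' where "pert_argmax eps Y s z = axis y' 1"
        by (metis pert_gap_pos_strict_max pert_argmax_strict_max(2))
      then show ?case using pert_argmax_far_dominant[OF assms, where y=y and z=z]
        by (cases "z \<in> E") (auto simp: E_def inner_axis_axis)
    qed
  qed
  finally show ?thesis using E by (simp add: E_def)
qed

lemma norm_conj_argmax_tendsto_infinity: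
  assumes b: "b \<in> closure pos_simplex - pos_simplex"
  shows "filterlim (\<lambda>x. norm (conj_argmax x)) at_top (at b within pos_simplex)"
  unfolding filterlim_at_top
proof
  fix R :: real
  have "closure pos_simplex \<subseteq> prob_simplex"
    by (rule closure_minimal) (auto intro: pos_simplex_subset_prob_simplex[THEN subsetD] closed_prob_simplex)
  then obtain y where y: "b $ y \<le> 0" using b by (force simp: prob_simplex_def pos_simplex_def not_le)
  define p where "p = measure std_gauss {z. \<forall>k. k \<noteq> y \<longrightarrow> 2 * max R 0 < eps * ((\<chi> i. z i) \<bullet> (Y y - Y k))}"
  have "0 < p" using emeasure_dominating_set_pos by (simp add: p_def std_gauss.emeasure_eq_measure)
  have "\<forall>\<^sub>F x in at b within pos_simplex. x \<in> ball b p \<and> x \<noteq> b \<and> x \<in> pos_simplex"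
    by (rule eventually_at_ball'[OF \<open>0 < p\<close>])
  then show "\<forall>\<^sub>F x in at b within pos_simplex. R \<le> norm (conj_argmax x)"
  proof (rule eventually_mono)
    fix x assume x: "x \<in> ball b p \<and> x \<noteq> b \<and> x \<in> pos_simplex"
    show "R \<le> norm (conj_argmax x)"
    proof (rule ccontr)
      assume "\<not> R \<le> norm (conj_argmax x)"
      then have "p \<le> pert_grad eps Y (conj_argmax x) $ y"
        unfolding p_def by (intro pert_grad_component_ge) simp
      also have "\<dots> = x $ y" using pert_grad_conj_argmax x by simp
      also have "\<dots> \<le> b $ y + norm (x - b)" using component_le_norm_cart[of "x - b" y] by simp
      also have "\<dots> < p" using x y by (simp add: dist_norm norm_minus_commute)
      finally show False by simp
    qed
  qed
qed

lemma legendre_on_fenchel_conj_Fpert: "legendre_on simplex_hull simplex_dir (fenchel_conj (Fpert eps Y))"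
proof -
  have "prob_simplex \<subseteq> (simplex_hull :: (real^'y) set)"
    unfolding prob_simplex_def simplex_hull_def by blast
  then have dom: "{x \<in> simplex_hull. fenchel_conj (Fpert eps Y) x \<noteq> \<infinity>} = prob_simplex"
    using dom_fenchel_conj_Fpert[of eps Y] by blast
  have "\<forall>x\<in>pos_simplex. \<bar>fenchel_conj (Fpert eps Y) x\<bar> \<noteq> \<infinity>"
    by (simp add: fenchel_conj_Fpert_eq)
  moreover have "\<forall>x\<in>pos_simplex. conj_argmax x \<in> simplex_dir \<and>
      ((\<lambda>x. real_of_ereal (fenchel_conj (Fpert eps Y) x)) has_derivative (\<lambda>h. conj_argmax x \<bullet> h))
        (at x within simplex_hull)"
    using conj_argmax(1) has_derivative_fenchel_conj_Fpert by blast
  ultimately show ?thesis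
    unfolding legendre_on_def Let_def dom interior_rel_prob_simplex
    using pos_simplex_nonempty strictly_convex_on_fenchel_conj_Fpert norm_conj_argmax_tendsto_infinity
    by blast
qed

end

theorem theorem3:
  fixes Y :: "'y::finite \<Rightarrow> real ^ 'd::finite" and eps :: real
  assumes no_conv: "\<And>y. Y y \<notin> convex hull (Y ` (UNIV - {y}))"
    and eps_pos: "eps > 0"
  defines "F \<equiv> Fpert eps Y"
  shows
    "(convex_on UNIV F \<and> (\<exists>L. L-lipschitz_on UNIV F)) \<and>
    (strictly_convex_on simplex_dir F \<and>
     (\<forall>x\<in>span {1}. \<forall>x'\<in>span {1}. \<forall>u::real.
         F (u *\<^sub>R x + (1 - u) *\<^sub>R x') = u * F x + (1 - u) * F x') \<and>
     (\<forall>s q0. q0 \<in> prob_simplex \<longrightarrow>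
        F s = (proj_ones s) \<bullet> q0 + F (s - proj_ones s))) \<and>
    (\<forall>s. (AE z in std_gauss. \<exists>!q. q \<in> prob_simplex \<and>
              (\<forall>q'\<in>prob_simplex. pert_obj eps Y s z q' \<le> pert_obj eps Y s z q)) \<and>
         (F has_derivative
            (\<lambda>h. (\<integral>z. (THE q. q \<in> prob_simplex \<and>
                     (\<forall>q'\<in>prob_simplex. pert_obj eps Y s z q' \<le> pert_obj eps Y s z q)) \<partial>std_gauss) \<bullet> h))
          (at s)) \<and>
    ({q. fenchel_conj F q \<noteq> \<infinity>} = prob_simplex \<and>
     legendre_on simplex_hull simplex_dir (fenchel_conj F))"
proof -
  interpret exposed_gaussian_perturbation Y eps using no_conv eps_pos by unfold_locales
  show ?thesis
    unfolding F_def pert_argmax_def[symmetric] pert_grad_def[symmetric]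
    by (intro conjI allI ballI impI exI[of _ 1] convex_on_Fpert Fpert_lipschitz strictly_convex_on_Fpert
        Fpert_affine_on_span_one Fpert_split_proj_ones AE_unique_pert_argmax has_derivative_Fpert
        dom_fenchel_conj_Fpert legendre_on_fenchel_conj_Fpert)
qed

end
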